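(* Let $d\ge2$, $\alpha\in(0,\infty)^d$, $j\in\{1,\dots,d\}$ and let $e_j\in\Delta_{(d-1)}$ be the $j$-th standard basis vector. Then for every $n\ge0$ and $y\in\Delta_{(d-1)}$, $$Q^{\alpha}_n(y,e_j)=Q^{(\alpha_j,|\alpha|-\alpha_j)}_n(y_j,1).$$
   Context: $\Delta_{(d-1)}=\{x\in[0,1]^d:\sum_ix_i=1\}$, $|\alpha|=\sum_i\alpha_i$. $D_\alpha$ is the Dirichlet distribution on $\Delta_{(d-1)}$ with density proportional to $\prod_i x_i^{\alpha_i-1}$. The Jacobi kernel $Q^\alpha_n(x,y)=\sum_kP_k(x)P_k(y)$ where $(P_k)$ is any $L^2(D_\alpha)$-orthonormal basis of the space of polynomials of degree $\le n$ on $\Delta_{(d-1)}$ orthogonal to all polynomials of degree $<n$. For $d=2$ and $a,b>0$, $Q^{(a,b)}_n(u,v)$, $u,v\in[0,1]$, denotes this kernel for $D_{(a,b)}$ written as a function of the first coordinate, i.e. the kernel for the Beta$(a,b)$ distribution with density proportional to $u^{a-1}(1-u)^{b-1}$ on $[0,1]$. *)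

theory Defs
  imports "HOL-Analysis.Analysis"
begin

text \<open>Points of R^d are represented as functions nat => real; only the
coordinates 0..d-1 are meaningful (the simplex forces the others to be 0).\<close>

definition std_simplex :: "nat \<Rightarrow> (nat \<Rightarrow> real) set" where
  "std_simplex d = {x. (\<forall>i<d. 0 \<le> x i \<and> x i \<le> 1) \<and> (\<forall>i\<ge>d. x i = 0) \<and> (\<Sum>i<d. x i) = 1}"

definition basis_pt :: "nat \<Rightarrow> nat \<Rightarrow> real" where
  "basis_pt j = (\<lambda>i. if i = j then 1 else 0)"

definition simplex_pt :: "nat \<Rightarrow> (nat \<Rightarrow> real) \<Rightarrow> (nat \<Rightarrow> real)" where
  "simplex_pt d z = (\<lambda>i. if i < d - 1 then z i else if i = d - 1 then 1 - (\<Sum>k<d - 1. z k) else 0)"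

definition simplex_region :: "nat \<Rightarrow> (nat \<Rightarrow> real) set" where
  "simplex_region d = {z. (\<forall>i<d - 1. 0 \<le> z i) \<and> (\<Sum>i<d - 1. z i) \<le> 1}"

text \<open>Unnormalised Dirichlet density (w.r.t. Lebesgue measure in the first d-1 coordinates).\<close>
definition dir_weight :: "nat \<Rightarrow> (nat \<Rightarrow> real) \<Rightarrow> (nat \<Rightarrow> real) \<Rightarrow> real" where
  "dir_weight d \<alpha> z = indicator (simplex_region d) z * (\<Prod>i<d. simplex_pt d z i powr (\<alpha> i - 1))"

definition leb_coords :: "nat \<Rightarrow> (nat \<Rightarrow> real) measure" where
  "leb_coords d = Pi\<^sub>M {..<d - 1} (\<lambda>_. lborel)"

definition dir_expect :: "nat \<Rightarrow> (nat \<Rightarrow> real) \<Rightarrow> ((nat \<Rightarrow> real) \<Rightarrow> real) \<Rightarrow> real" where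
  "dir_expect d \<alpha> f =
     (\<integral>z. f (simplex_pt d z) * dir_weight d \<alpha> z \<partial>leb_coords d) /
     (\<integral>z. dir_weight d \<alpha> z \<partial>leb_coords d)"

definition dir_inner :: "nat \<Rightarrow> (nat \<Rightarrow> real) \<Rightarrow> ((nat \<Rightarrow> real) \<Rightarrow> real) \<Rightarrow> ((nat \<Rightarrow> real) \<Rightarrow> real) \<Rightarrow> real" where
  "dir_inner d \<alpha> f g = dir_expect d \<alpha> (\<lambda>x. f x * g x)"

definition exps :: "nat \<Rightarrow> nat \<Rightarrow> (nat \<Rightarrow> nat) set" where
  "exps d n = {k. (\<forall>i\<ge>d. k i = 0) \<and> (\<Sum>i<d. k i) \<le> n}"

definition poly_deg_le :: "nat \<Rightarrow> nat \<Rightarrow> ((nat \<Rightarrow> real) \<Rightarrow> real) \<Rightarrow> bool" where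
  "poly_deg_le d n p \<longleftrightarrow>
     (\<exists>c :: (nat \<Rightarrow> nat) \<Rightarrow> real. \<forall>x. p x = (\<Sum>k\<in>exps d n. c k * (\<Prod>i<d. x i ^ k i)))"

definition orth_space :: "nat \<Rightarrow> (nat \<Rightarrow> real) \<Rightarrow> nat \<Rightarrow> ((nat \<Rightarrow> real) \<Rightarrow> real) set" where
  "orth_space d \<alpha> n =
     {p. poly_deg_le d n p \<and> (\<forall>m<n. \<forall>q. poly_deg_le d m q \<longrightarrow> dir_inner d \<alpha> p q = 0)}"

definition is_onb :: "nat \<Rightarrow> (nat \<Rightarrow> real) \<Rightarrow> nat \<Rightarrow> ((nat \<Rightarrow> real) \<Rightarrow> real) list \<Rightarrow> bool" where
  "is_onb d \<alpha> n Ps \<longleftrightarrow>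
     set Ps \<subseteq> orth_space d \<alpha> n \<and>
     (\<forall>i<length Ps. \<forall>j<length Ps. dir_inner d \<alpha> (Ps ! i) (Ps ! j) = (if i = j then 1 else 0)) \<and>
     (\<forall>p\<in>orth_space d \<alpha> n. \<exists>c. \<forall>x\<in>std_simplex d. p x = (\<Sum>i<length Ps. c i * (Ps ! i) x))"

definition jacobi_kernel :: "nat \<Rightarrow> (nat \<Rightarrow> real) \<Rightarrow> nat \<Rightarrow> (nat \<Rightarrow> real) \<Rightarrow> (nat \<Rightarrow> real) \<Rightarrow> real" where
  "jacobi_kernel d \<alpha> n x y = (let Ps = (SOME Ps. is_onb d \<alpha> n Ps) in (\<Sum>P\<leftarrow>Ps. P x * P y))"

text \<open>The d = 2 kernel for Beta(a,b) written as a function of the first coordinate.\<close>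
definition pt2 :: "real \<Rightarrow> nat \<Rightarrow> real" where
  "pt2 u = (\<lambda>i. if i = 0 then u else if i = 1 then 1 - u else 0)"

definition jacobi_kernel_1 :: "real \<Rightarrow> real \<Rightarrow> nat \<Rightarrow> real \<Rightarrow> real \<Rightarrow> real" where
  "jacobi_kernel_1 a b n u v = jacobi_kernel 2 (\<lambda>i. if i = 0 then a else b) n (pt2 u) (pt2 v)"

end

theory Submission
  imports Defs "HOL-Computational_Algebra.Polynomial"
begin

text \<open>Write K for the degree-n kernel of Beta(alpha_j, |alpha| - alpha_j). The Dirichlet
  distribution aggregates: integrating g(y_j) p(y) under D_alpha, for a univariate g and a
  polynomial p, gives the Beta integral of g(u) h(u), where h is a polynomial in u of the same
  degree as p with h(1) = p(e_j); this is a computation with Dirichlet moments. Consequently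
  q(y) = K(y_j, 1) is D_alpha-orthogonal to all polynomials of degree < n (because K(., 1) is
  Beta-orthogonal to them). For p in the degree-n orthogonal space, h lies in the Beta one, so
  the reproducing property of K gives <p, q> = <h, K(., 1)> = h(1) = p(e_j). An element of the degree-n orthogonal space
  that reproduces evaluation at e_j is the kernel itself, so Q^alpha_n(y, e_j) = q(y).\<close>

section \<open>Dirichlet integrals\<close>

lemma Gamma_real_nonzero: "x > 0 \<Longrightarrow> Gamma (x::real) \<noteq> 0"
  using Gamma_real_pos[of x] by linarith

definition dirichlet_density :: "nat \<Rightarrow> (nat \<Rightarrow> real) \<Rightarrow> real \<Rightarrow> real \<Rightarrow> (nat \<Rightarrow> real) \<Rightarrow> real" where
  "dirichlet_density N \<beta> c s z = (if (\<forall>i<N. 0 \<le> z i) \<and> (\<Sum>i<N. z i) \<le> s then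
      (\<Prod>i<N. z i powr (\<beta> i - 1)) * (s - (\<Sum>i<N. z i)) powr (c - 1) else 0)"

lemma dirichlet_density_nonneg: "dirichlet_density N \<beta> c s z \<ge> 0"
  unfolding dirichlet_density_def by (auto intro!: prod_nonneg mult_nonneg_nonneg)

lemma dirichlet_density_measurable[measurable]:
  "{..<N} \<subseteq> I \<Longrightarrow> dirichlet_density N \<beta> c s \<in> borel_measurable (Pi\<^sub>M I (\<lambda>_. lborel))"
proof -
  assume I: "{..<N} \<subseteq> I"
  have c[measurable]: "i < N \<Longrightarrow> (\<lambda>z. z i) \<in> borel_measurable (Pi\<^sub>M I (\<lambda>_. lborel))" for i
    using I measurable_component_singleton[of i I "\<lambda>_. lborel"] by auto
  have s[measurable]: "(\<lambda>z. \<Sum>i<N. z i) \<in> borel_measurable (Pi\<^sub>M I (\<lambda>_. lborel))"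
    by (intro borel_measurable_sum) (auto)
  have p[measurable]: "(\<lambda>z. \<Prod>i<N. z i powr (\<beta> i - 1)) \<in> borel_measurable (Pi\<^sub>M I (\<lambda>_. lborel))"
    by (intro borel_measurable_prod powr_real_measurable) auto
  have q[measurable]: "(\<lambda>z. (s - (\<Sum>i<N. z i)) powr (c - 1))
      \<in> borel_measurable (Pi\<^sub>M I (\<lambda>_. lborel))"
    by (intro powr_real_measurable borel_measurable_diff) auto
  have A: "{z \<in> space (Pi\<^sub>M I (\<lambda>_. lborel)). (\<forall>i<N. 0 \<le> z i) \<and> (\<Sum>i<N. z i) \<le> s}
      \<in> sets (Pi\<^sub>M I (\<lambda>_. lborel))"
    by measurable
  show ?thesis unfolding dirichlet_density_def
    by (intro measurable_If[OF _ _ A] borel_measurable_times p q) auto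
qed

lemma nn_integral_beta_scaled:
  fixes a b s :: real
  assumes a: "a > 0" and b: "b > 0" and s: "s > 0"
  shows "(\<integral>\<^sup>+y. ennreal (indicator {0..s} y * (y powr (a-1) * (s-y) powr (b-1))) \<partial>lborel)
         = ennreal (s powr (a+b-1) * Beta a b)"
proof -
  have I: "(\<integral>\<^sup>+t. ennreal (indicator {0..1} t * (t powr (a-1) * (1-t) powr (b-1))) \<partial>lborel)
      = ennreal (Beta a b)"
    using nn_integral_has_integral_lebesgue[OF _ has_integral_Beta_real[OF a b]] by auto
  have "(\<integral>\<^sup>+y. ennreal (indicator {0..s} y * (y powr (a-1) * (s-y) powr (b-1))) \<partial>lborel)
      = ennreal \<bar>s\<bar> * (\<integral>\<^sup>+t. ennreal (indicator {0..s} (0 + s*t) * ((0+s*t) powr (a-1) * (s-(0+s*t)) powr (b-1))) \<partial>lborel)"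
    by (rule nn_integral_real_affine) (use s in auto)
  also have "\<dots> = ennreal s
      * (\<integral>\<^sup>+t. ennreal (s powr (a+b-2)) * ennreal (indicator {0..1} t * (t powr (a-1) * (1-t) powr (b-1))) \<partial>lborel)"
  proof -
    have "ennreal (indicator {0..s} (0 + s*t) * ((0+s*t) powr (a-1) * (s-(0+s*t)) powr (b-1)))
        = ennreal (s powr (a+b-2)) * ennreal (indicator {0..1} t * (t powr (a-1) * (1-t) powr (b-1)))" for t
    proof (cases "t \<in> {0..1}")
      case True
      have "s - s*t = s * (1-t)" by (simp add: algebra_simps)
      then have "(s*t) powr (a-1) * (s-s*t) powr (b-1) = (s powr (a-1) * s powr (b-1))
          * (t powr (a-1) * (1-t) powr (b-1))"
        using True s by (simp add: powr_mult)
      also have "s powr (a-1) * s powr (b-1) = s powr (a+b-2)" by (simp add: powr_add[symmetric])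
      finally have "(s*t) powr (a-1) * (s-s*t) powr (b-1) = s powr (a+b-2)
          * (t powr (a-1) * (1-t) powr (b-1))" .
      moreover have "0 + s*t \<in> {0..s}" using True s by (auto simp: mult_le_cancel_left1)
      ultimately show ?thesis using True s by (simp add: ennreal_mult'[symmetric])
    next
      case False
      then have "0 + s*t \<notin> {0..s}" using s by (auto simp: zero_le_mult_iff mult_le_cancel_left1)
      then show ?thesis using False by simp
    qed
    then show ?thesis using s by simp
  qed
  also have "\<dots> = ennreal s * ennreal (s powr (a+b-2)) * ennreal (Beta a b)"
    by (subst nn_integral_cmult) (auto simp: I mult.assoc)
  also have "\<dots> = ennreal (s powr (a+b-1) * Beta a b)"
  proof -
    have "s * s powr (a+b-2) = s powr (a+b-1)" using s
      by (simp add: powr_add[symmetric] powr_mult_base)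
    moreover have "Beta a b \<ge> 0" using a b by (simp add: Beta_def)
    ultimately show ?thesis using s by (simp add: ennreal_mult'[symmetric])
  qed
  finally show ?thesis .
qed

lemma dirichlet_density_fun_upd:
  "dirichlet_density (Suc N) \<beta> c s (x(N:=y))
      = (if 0 \<le> y then y powr (\<beta> N - 1) * dirichlet_density N \<beta> c (s - y) x else 0)"
proof -
  have e1: "(\<forall>i<Suc N. 0 \<le> (x(N:=y)) i) \<longleftrightarrow> (\<forall>i<N. 0 \<le> x i) \<and> 0 \<le> y"
    by (auto simp: less_Suc_eq)
  have e2: "(\<Sum>i<Suc N. (x(N:=y)) i) = (\<Sum>i<N. x i) + y" by simp
  have e3: "(\<Prod>i<Suc N. (x(N:=y)) i powr (\<beta> i - 1)) = (\<Prod>i<N. x i powr (\<beta> i - 1)) * y powr (\<beta> N - 1)"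
    by simp
  show ?thesis unfolding dirichlet_density_def e1 e2 e3
    by (auto simp: algebra_simps)
qed

lemma dirichlet_density_eq_0_if_neg: "s < 0 \<Longrightarrow> dirichlet_density N \<beta> c s z = 0"
proof -
  assume "s < 0"
  have "0 \<le> (\<Sum>i<N. z i)" if "\<forall>i<N. 0 \<le> z i" using that by (intro sum_nonneg) auto
  then show ?thesis using \<open>s < 0\<close> unfolding dirichlet_density_def by auto
qed

lemma nn_integral_dirichlet_density_fun_upd:
  "(\<integral>\<^sup>+x. ennreal (dirichlet_density (Suc N) \<beta> c s (x(N:=y))) \<partial>Pi\<^sub>M {..<N} (\<lambda>_. lborel))
   = ennreal (if 0 \<le> y then y powr (\<beta> N - 1) else 0) *
     (\<integral>\<^sup>+x. ennreal (dirichlet_density N \<beta> c (s - y) x) \<partial>Pi\<^sub>M {..<N} (\<lambda>_. lborel))"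
proof (cases "0 \<le> y")
  case True
  then have "(\<integral>\<^sup>+x. ennreal (dirichlet_density (Suc N) \<beta> c s (x(N:=y))) \<partial>Pi\<^sub>M {..<N} (\<lambda>_. lborel))
      = (\<integral>\<^sup>+x. ennreal (y powr (\<beta> N - 1)) * ennreal (dirichlet_density N \<beta> c (s - y) x) \<partial>Pi\<^sub>M {..<N} (\<lambda>_. lborel))"
    by (intro nn_integral_cong)
      (simp add: dirichlet_density_fun_upd ennreal_mult' dirichlet_density_nonneg)
  with True show ?thesis by (simp add: nn_integral_cmult)
qed (simp add: dirichlet_density_fun_upd)

lemma nn_integral_dirichlet_density:
  assumes "\<forall>i<N. \<beta> i > 0" "c > 0" "s > 0"
  shows "(\<integral>\<^sup>+z. ennreal (dirichlet_density N \<beta> c s z) \<partial>Pi\<^sub>M {..<N} (\<lambda>_. lborel))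
     = ennreal (s powr ((\<Sum>i<N. \<beta> i) + c - 1) * (\<Prod>i<N. Gamma (\<beta> i)) * Gamma c / Gamma ((\<Sum>i<N. \<beta> i) + c))"
  using assms
proof (induction N arbitrary: s)
  case 0
  interpret product_sigma_finite "\<lambda>_::nat. lborel::real measure" by standard
  show ?case using 0 Gamma_real_nonzero[of c] by (simp add: PiM_empty dirichlet_density_def)
next
  case (Suc N)
  interpret product_sigma_finite "\<lambda>_::nat. lborel::real measure" by standard
  define B where "B = (\<Sum>i<N. \<beta> i) + c"
  define G where "G = (\<Prod>i<N. Gamma (\<beta> i)) * Gamma c / Gamma B"
  have Bpos: "B > 0"
    unfolding B_def using Suc.prems by (intro add_nonneg_pos sum_nonneg) (auto simp: less_imp_le)
  have bN: "\<beta> N > 0" using Suc.prems by auto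
  have Gnn: "G \<ge> 0" unfolding G_def using Suc.prems Bpos
    by (intro divide_nonneg_pos mult_nonneg_nonneg prod_nonneg)
      (auto intro: less_imp_le Gamma_real_pos)
  have IH: "(\<integral>\<^sup>+z. ennreal (dirichlet_density N \<beta> c t z) \<partial>Pi\<^sub>M {..<N} (\<lambda>_. lborel))
      = ennreal (t powr (B - 1) * G)"
    if "t > 0" for t
    using Suc.IH[of t] Suc.prems that unfolding B_def G_def by (simp add: mult.assoc)
  have "(\<integral>\<^sup>+z. ennreal (dirichlet_density (Suc N) \<beta> c s z) \<partial>Pi\<^sub>M {..<Suc N} (\<lambda>_. lborel))
      = (\<integral>\<^sup>+y. (\<integral>\<^sup>+x. ennreal (dirichlet_density (Suc N) \<beta> c s (x(N:=y))) \<partial>Pi\<^sub>M {..<N} (\<lambda>_. lborel)) \<partial>lborel)"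
    unfolding lessThan_Suc
    by (subst product_nn_integral_insert_rev)
      (auto intro!: measurable_compose[OF dirichlet_density_measurable[of "Suc N"] measurable_ennreal])
  also have "\<dots>
      = (\<integral>\<^sup>+y. ennreal (indicator {0..s} y * (y powr (\<beta> N - 1) * (s-y) powr (B-1))) * ennreal G \<partial>lborel)"
  proof (rule nn_integral_cong_AE)
    show "AE y in lborel. (\<integral>\<^sup>+x. ennreal (dirichlet_density (Suc N) \<beta> c s (x(N:=y))) \<partial>Pi\<^sub>M {..<N} (\<lambda>_. lborel))
       = ennreal (indicator {0..s} y * (y powr (\<beta> N - 1) * (s-y) powr (B-1))) * ennreal G"
      using AE_lborel_singleton[of s]
    proof eventually_elim
      case (elim y)
      consider "y < 0" | "0 \<le> y" "y < s" | "s < y" using elim by linarith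
      then show ?case
      proof cases
        case 2
        then show ?thesis using Gnn
          by (simp add: nn_integral_dirichlet_density_fun_upd IH ennreal_mult'[symmetric] mult.assoc)
      next
        case 3
        then show ?thesis
          by (simp add: nn_integral_dirichlet_density_fun_upd dirichlet_density_eq_0_if_neg)
      qed (simp add: nn_integral_dirichlet_density_fun_upd)
    qed
  qed
  also have "\<dots>
      = (\<integral>\<^sup>+y. ennreal (indicator {0..s} y * (y powr (\<beta> N - 1) * (s-y) powr (B-1))) \<partial>lborel) * ennreal G"
    by (subst nn_integral_multc) auto
  also have "\<dots> = ennreal (s powr (\<beta> N + B - 1) * Beta (\<beta> N) B) * ennreal G"
    by (subst nn_integral_beta_scaled[OF bN Bpos Suc.prems(3)]) simp
  also have "\<dots>
      = ennreal (s powr ((\<Sum>i<Suc N. \<beta> i) + c - 1) * (\<Prod>i<Suc N. Gamma (\<beta> i)) * Gamma c / Gamma ((\<Sum>i<Suc N. \<beta> i) + c))"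
  proof -
    have "Beta (\<beta> N) B \<ge> 0" using bN Bpos by (simp add: Beta_def)
    moreover have "Gamma B \<noteq> 0" using Bpos by (rule Gamma_real_nonzero)
    moreover have sumeq: "(\<Sum>i<Suc N. \<beta> i) + c = \<beta> N + B" unfolding B_def by simp
    ultimately have "s powr (\<beta> N + B - 1) * Beta (\<beta> N) B * G
        = s powr ((\<Sum>i<Suc N. \<beta> i) + c - 1) * (\<Prod>i<Suc N. Gamma (\<beta> i)) * Gamma c / Gamma ((\<Sum>i<Suc N. \<beta> i) + c)"
      unfolding G_def Beta_def sumeq by (simp add: field_simps)
    then show ?thesis using Gnn by (simp add: ennreal_mult''[symmetric])
  qed
  finally show ?case .
qed
section \<open>Monomials, moments and polynomials on the simplex\<close>

definition monomial :: "nat \<Rightarrow> (nat \<Rightarrow> nat) \<Rightarrow> (nat \<Rightarrow> real) \<Rightarrow> real" where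
  "monomial d k x = (\<Prod>i<d. x i ^ k i)"

lemma monomial_zero [simp]: "monomial d (\<lambda>_. 0) x = 1"
  unfolding monomial_def by simp

definition multi_beta :: "nat \<Rightarrow> (nat \<Rightarrow> real) \<Rightarrow> real" where
  "multi_beta d \<beta> = (\<Prod>i<d. Gamma (\<beta> i)) / Gamma (\<Sum>i<d. \<beta> i)"

lemma multi_beta_pos:
  assumes "\<forall>i<d. \<beta> i > 0" "d \<ge> 1"
  shows "multi_beta d \<beta> > 0"
proof -
  have "(\<Sum>i<d. \<beta> i) > 0"
    using assms by (intro sum_pos) (auto simp: lessThan_empty_iff)
  then show ?thesis unfolding multi_beta_def using assms
    by (intro divide_pos_pos prod_pos Gamma_real_pos) auto
qed

lemma simplex_pt_in_std_simplex:
  assumes "d \<ge> 1" "z \<in> simplex_region d"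
  shows "simplex_pt d z \<in> std_simplex d"
proof -
  obtain N where d: "d = Suc N" using assms(1) by (cases d) auto
  have nn: "\<forall>i<N. 0 \<le> z i" and s1: "(\<Sum>i<N. z i) \<le> 1"
    using assms(2) unfolding simplex_region_def d by auto
  have le: "z i \<le> 1" if "i < N" for i
  proof -
    have "z i \<le> (\<Sum>i<N. z i)" using that nn by (intro member_le_sum) auto
    then show ?thesis using s1 by simp
  qed
  have s0: "0 \<le> (\<Sum>i<N. z i)" using nn by (intro sum_nonneg) auto
  have "(\<Sum>i<Suc N. simplex_pt (Suc N) z i) = (\<Sum>i<N. z i) + (1 - (\<Sum>i<N. z i))"
    unfolding simplex_pt_def by simp
  then show ?thesis unfolding std_simplex_def d using nn le s1 s0
    by (auto simp: simplex_pt_def less_Suc_eq)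
qed

lemma simplex_pt_id: "x \<in> std_simplex d \<Longrightarrow> d \<ge> 1 \<Longrightarrow> simplex_pt d x = x"
proof -
  assume x: "x \<in> std_simplex d" and d: "d \<ge> 1"
  obtain N where dN: "d = Suc N" using d by (cases d) auto
  have "(\<Sum>i<Suc N. x i) = 1" using x unfolding std_simplex_def dN by auto
  then have "x N = 1 - (\<Sum>i<N. x i)" by simp
  then show ?thesis using x unfolding simplex_pt_def std_simplex_def dN
    by (auto simp: fun_eq_iff not_less)
qed

lemma simplex_pt_cong: "(\<And>i. i < d - 1 \<Longrightarrow> z i = z' i) \<Longrightarrow> simplex_pt d z = simplex_pt d z'"
  unfolding simplex_pt_def by (auto simp: fun_eq_iff)

lemma dir_weight_cong:
  assumes "\<And>i. i < d - 1 \<Longrightarrow> z i = z' i"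
  shows "dir_weight d \<alpha> z = dir_weight d \<alpha> z'"
proof -
  have "(\<Sum>i<d - 1. z i) = (\<Sum>i<d - 1. z' i)" using assms by (intro sum.cong) auto
  then have "z \<in> simplex_region d \<longleftrightarrow> z' \<in> simplex_region d"
    unfolding simplex_region_def using assms by auto
  then show ?thesis unfolding dir_weight_def using simplex_pt_cong[of d z z'] assms
    by (simp add: indicator_def)
qed

lemma dir_weight_nonneg: "dir_weight d \<alpha> z \<ge> 0"
  unfolding dir_weight_def by (intro mult_nonneg_nonneg prod_nonneg) auto

lemma dir_weight_outside: "z \<notin> simplex_region d \<Longrightarrow> dir_weight d \<alpha> z = 0"
  unfolding dir_weight_def by simp

lemma power_mult_powr: "0 \<le> (x::real) \<Longrightarrow> x ^ k * x powr (a - 1) = x powr (a + real k - 1)"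
proof (cases "x = 0")
  case False
  assume "0 \<le> x"
  then have "x > 0" using False by auto
  then show ?thesis by (simp add: powr_realpow[symmetric] powr_add[symmetric] algebra_simps)
qed simp

lemma monomial_mult_dir_weight:
  assumes "d \<ge> 1"
  shows "monomial d k (simplex_pt d z) * dir_weight d \<alpha> z
     = dirichlet_density (d-1) (\<lambda>i. \<alpha> i + real (k i)) (\<alpha> (d-1) + real (k (d-1))) 1 z"
proof -
  obtain N where d: "d = Suc N" using assms(1) by (cases d) auto
  show ?thesis
  proof (cases "z \<in> simplex_region d")
    case False
    then show ?thesis unfolding dir_weight_def dirichlet_density_def simplex_region_def d by auto
  next
    case True
    then have nn: "\<forall>i<N. 0 \<le> z i" and s1: "(\<Sum>i<N. z i) \<le> 1" unfolding simplex_region_def d by auto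
    have spnn: "simplex_pt d z i \<ge> 0" if "i < d" for i
      using simplex_pt_in_std_simplex[OF assms True] that unfolding std_simplex_def by auto
    have "monomial d k (simplex_pt d z) * dir_weight d \<alpha> z
        = (\<Prod>i<d. simplex_pt d z i ^ k i * simplex_pt d z i powr (\<alpha> i - 1))"
      using True unfolding monomial_def dir_weight_def by (simp add: prod.distrib)
    also have "\<dots> = (\<Prod>i<d. simplex_pt d z i powr (\<alpha> i + real (k i) - 1))"
      using spnn by (intro prod.cong refl power_mult_powr) auto
    also have "\<dots> = (\<Prod>i<N. z i powr (\<alpha> i + real (k i) - 1))
        * (1 - (\<Sum>i<N. z i)) powr (\<alpha> N + real (k N) - 1)"
      unfolding d by (simp add: simplex_pt_def)
    also have "\<dots> = dirichlet_density (d-1) (\<lambda>i. \<alpha> i + real (k i)) (\<alpha> (d-1) + real (k (d-1))) 1 z"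
      using nn s1 unfolding dirichlet_density_def d by simp
    finally show ?thesis .
  qed
qed

lemma simplex_pt_measurable[measurable]: "(\<lambda>z. simplex_pt d z i) \<in> borel_measurable (leb_coords d)"
proof -
  have c: "k < d - 1 \<Longrightarrow> (\<lambda>z. z k) \<in> borel_measurable (leb_coords d)" for k
    unfolding leb_coords_def using measurable_component_singleton[of k "{..<d-1}" "\<lambda>_. lborel"]
      by auto
  have s: "(\<lambda>z. \<Sum>k<d-1. z k) \<in> borel_measurable (leb_coords d)"
    using c by (intro borel_measurable_sum) auto
  show ?thesis
  proof (cases "i < d - 1")
    case True then show ?thesis unfolding simplex_pt_def using c by simp
  next
    case False then show ?thesis unfolding simplex_pt_def using s by (cases "i = d - 1") auto
  qed
qed

lemma monomial_simplex_pt_measurable[measurable]: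
  "(\<lambda>z. monomial d k (simplex_pt d z)) \<in> borel_measurable (leb_coords d)"
  unfolding monomial_def
    by (intro borel_measurable_prod borel_measurable_power simplex_pt_measurable)

lemma dir_weight_measurable[measurable]:
  assumes "d \<ge> 1" shows "dir_weight d \<alpha> \<in> borel_measurable (leb_coords d)"
proof -
  have "dir_weight d \<alpha> = (\<lambda>z. dirichlet_density (d-1) (\<lambda>i. \<alpha> i + real 0) (\<alpha> (d-1) + real 0) 1 z)"
    using monomial_mult_dir_weight[OF assms, of "\<lambda>_. 0"] by (auto simp: fun_eq_iff)
  then show ?thesis unfolding leb_coords_def by (simp add: dirichlet_density_measurable)
qed

lemma continuous_on_simplex_pt: "continuous_on UNIV (\<lambda>z::nat\<Rightarrow>real. simplex_pt d z i)"
proof (cases "i < d - 1")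
  case True then show ?thesis unfolding simplex_pt_def by simp
next
  case False
  have "continuous_on UNIV (\<lambda>z::nat\<Rightarrow>real. 1 - (\<Sum>k<d-1. z k))"
    by (intro continuous_intros) simp
  then show ?thesis using False unfolding simplex_pt_def by (cases "i = d - 1") auto
qed

definition bounded_measurable :: "nat \<Rightarrow> ((nat \<Rightarrow> real) \<Rightarrow> real) \<Rightarrow> bool" where
  "bounded_measurable d f \<longleftrightarrow>
     (\<lambda>z. f (simplex_pt d z)) \<in> borel_measurable (leb_coords d) \<and> (\<exists>B. \<forall>x\<in>std_simplex d. \<bar>f x\<bar> \<le> B)"

lemma bounded_measurable_add:
  "bounded_measurable d f \<Longrightarrow> bounded_measurable d g \<Longrightarrow> bounded_measurable d (\<lambda>x. f x + g x)"
proof -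
  assume f: "bounded_measurable d f" and g: "bounded_measurable d g"
  obtain A where A: "\<forall>x\<in>std_simplex d. \<bar>f x\<bar> \<le> A" using f unfolding bounded_measurable_def by auto
  obtain B where B: "\<forall>x\<in>std_simplex d. \<bar>g x\<bar> \<le> B" using g unfolding bounded_measurable_def by auto
  have "\<forall>x\<in>std_simplex d. \<bar>f x + g x\<bar> \<le> A + B"
    using A B by (meson abs_triangle_ineq add_mono order_trans)
  then show ?thesis using f g unfolding bounded_measurable_def by auto
qed

lemma bounded_measurable_mult:
  "bounded_measurable d f \<Longrightarrow> bounded_measurable d g \<Longrightarrow> bounded_measurable d (\<lambda>x. f x * g x)"
proof -
  assume f: "bounded_measurable d f" and g: "bounded_measurable d g"
  obtain A where A: "\<forall>x\<in>std_simplex d. \<bar>f x\<bar> \<le> A" using f unfolding bounded_measurable_def by auto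
  obtain B where B: "\<forall>x\<in>std_simplex d. \<bar>g x\<bar> \<le> B" using g unfolding bounded_measurable_def by auto
  have "\<forall>x\<in>std_simplex d. \<bar>f x * g x\<bar> \<le> A * B" using A B by (auto simp: abs_mult intro!: mult_mono)
  then show ?thesis using f g unfolding bounded_measurable_def by auto
qed

lemma bounded_measurable_const: "bounded_measurable d (\<lambda>x. c)"
  unfolding bounded_measurable_def by auto

lemma bounded_measurable_cmult: "bounded_measurable d f \<Longrightarrow> bounded_measurable d (\<lambda>x. c * f x)"
  using bounded_measurable_mult[OF bounded_measurable_const] by blast

lemma bounded_measurable_sum:
  "finite I \<Longrightarrow> (\<And>i. i \<in> I \<Longrightarrow> bounded_measurable d (f i)) \<Longrightarrow> bounded_measurable d (\<lambda>x. \<Sum>i\<in>I. f i x)"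
  by (induction I rule: finite_induct) (auto intro: bounded_measurable_add bounded_measurable_const)

lemma bounded_measurable_monomial: "bounded_measurable d (monomial d k)"
proof -
  have "\<forall>x\<in>std_simplex d. \<bar>monomial d k x\<bar> \<le> 1"
    unfolding std_simplex_def monomial_def
      by (auto simp: abs_prod power_abs intro!: prod_le_1 power_le_one)
  then show ?thesis unfolding bounded_measurable_def by auto
qed

lemma dir_expect_cong:
  assumes "d \<ge> 1" "\<forall>x\<in>std_simplex d. f x = g x"
  shows "dir_expect d \<alpha> f = dir_expect d \<alpha> g"
proof -
  have "f (simplex_pt d z) * dir_weight d \<alpha> z = g (simplex_pt d z) * dir_weight d \<alpha> z" for z
    by (cases "z \<in> simplex_region d")
      (use assms simplex_pt_in_std_simplex[OF assms(1)] in \<open>auto simp: dir_weight_outside\<close>)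
  then have "(\<lambda>z. f (simplex_pt d z) * dir_weight d \<alpha> z)
      = (\<lambda>z. g (simplex_pt d z) * dir_weight d \<alpha> z)"
    by (rule ext)
  then show ?thesis unfolding dir_expect_def by simp
qed

lemma finite_exps: "finite (exps d n)"
proof -
  have "exps d n \<subseteq> (\<lambda>f i. if i < d then f i else 0) ` (PiE {..<d} (\<lambda>_. {..n}))"
  proof
    fix k assume k: "k \<in> exps d n"
    have le: "k i \<le> n" if "i < d" for i
    proof -
      have "k i \<le> (\<Sum>i<d. k i)" using that by (intro member_le_sum) auto
      then show ?thesis using k unfolding exps_def by auto
    qed
    have "k = (\<lambda>i. if i < d then (restrict k {..<d}) i else 0)"
      using k unfolding exps_def by (auto simp: fun_eq_iff)
    moreover have "restrict k {..<d} \<in> PiE {..<d} (\<lambda>_. {..n})" using le by auto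
    ultimately show "k \<in> (\<lambda>f i. if i < d then f i else 0) ` (PiE {..<d} (\<lambda>_. {..n}))" by blast
  qed
  then show ?thesis by (rule finite_subset) (auto intro: finite_PiE)
qed

lemma poly_deg_le_iff: "poly_deg_le d n p \<longleftrightarrow> (\<exists>c. p = (\<lambda>x. \<Sum>k\<in>exps d n. c k * monomial d k x))"
  unfolding poly_deg_le_def monomial_def by (auto simp: fun_eq_iff)

lemma poly_deg_le_add: "poly_deg_le d n p \<Longrightarrow> poly_deg_le d n q \<Longrightarrow> poly_deg_le d n (\<lambda>x. p x + q x)"
  unfolding poly_deg_le_iff
proof (elim exE)
  fix c e assume "p = (\<lambda>x. \<Sum>k\<in>exps d n. c k * monomial d k x)"
    "q = (\<lambda>x. \<Sum>k\<in>exps d n. e k * monomial d k x)"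
  then show "\<exists>c. (\<lambda>x. p x + q x) = (\<lambda>x. \<Sum>k\<in>exps d n. c k * monomial d k x)"
    by (intro exI[of _ "\<lambda>k. c k + e k"]) (simp add: sum.distrib distrib_right)
qed

lemma poly_deg_le_cmult: "poly_deg_le d n p \<Longrightarrow> poly_deg_le d n (\<lambda>x. a * p x)"
  unfolding poly_deg_le_iff
proof (elim exE)
  fix c assume "p = (\<lambda>x. \<Sum>k\<in>exps d n. c k * monomial d k x)"
  then show "\<exists>c. (\<lambda>x. a * p x) = (\<lambda>x. \<Sum>k\<in>exps d n. c k * monomial d k x)"
    by (intro exI[of _ "\<lambda>k. a * c k"]) (simp add: sum_distrib_left mult.assoc)
qed

lemma poly_deg_le_zero: "poly_deg_le d n (\<lambda>x. 0)"
  unfolding poly_deg_le_iff by (intro exI[of _ "\<lambda>k. 0"]) simp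

lemma poly_deg_le_sum:
  "finite I \<Longrightarrow> (\<And>i. i \<in> I \<Longrightarrow> poly_deg_le d n (f i)) \<Longrightarrow> poly_deg_le d n (\<lambda>x. \<Sum>i\<in>I. f i x)"
  by (induction I rule: finite_induct) (auto intro: poly_deg_le_add poly_deg_le_zero)

lemma poly_deg_le_monomial: "k \<in> exps d n \<Longrightarrow> poly_deg_le d n (monomial d k)"
  unfolding poly_deg_le_iff
proof (intro exI[of _ "\<lambda>k'. if k' = k then 1 else 0"] ext)
  fix x assume k: "k \<in> exps d n"
  have "(\<Sum>ka\<in>exps d n. (if ka = k then 1 else 0) * monomial d ka x)
      = (\<Sum>ka\<in>exps d n. (if ka = k then monomial d ka x else 0))"
    by (intro sum.cong) auto
  also have "\<dots> = monomial d k x" using k by (simp add: sum.delta finite_exps)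
  finally show "monomial d k x = (\<Sum>ka\<in>exps d n. (if ka = k then 1 else 0) * monomial d ka x)"
    by simp
qed

lemma poly_deg_le_mono: "n \<le> m \<Longrightarrow> poly_deg_le d n p \<Longrightarrow> poly_deg_le d m p"
  unfolding poly_deg_le_iff
proof (elim exE)
  fix c assume nm: "n \<le> m" and p: "p = (\<lambda>x. \<Sum>k\<in>exps d n. c k * monomial d k x)"
  have sub: "exps d n \<subseteq> exps d m" using nm unfolding exps_def by auto
  have "(\<Sum>k\<in>exps d m. (if k \<in> exps d n then c k else 0) * monomial d k x)
      = (\<Sum>k\<in>exps d n. c k * monomial d k x)" for x
    using sub finite_exps by (intro sum.mono_neutral_cong_right) auto
  then show "\<exists>c. p = (\<lambda>x. \<Sum>k\<in>exps d m. c k * monomial d k x)"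
    using p by (intro exI[of _ "\<lambda>k. if k \<in> exps d n then c k else 0"]) auto
qed

lemma poly_deg_le_bounded_measurable: "poly_deg_le d n p \<Longrightarrow> bounded_measurable d p"
  unfolding poly_deg_le_iff
    by (auto intro!: bounded_measurable_sum bounded_measurable_cmult bounded_measurable_monomial finite_exps)

lemma monomial_single: "j < d \<Longrightarrow> monomial d (\<lambda>i. if i = j then m else 0) y = y j ^ m"
proof -
  assume j: "j < d"
  have "(\<Prod>i<d. y i ^ (if i = j then m else 0)) = (\<Prod>i\<in>{j}. y i ^ m)"
    using j by (intro prod.mono_neutral_cong_right) auto
  then show ?thesis unfolding monomial_def by simp
qed

lemma poly_deg_le_univariate:
  assumes "degree Q \<le> n" "j < d"
  shows "poly_deg_le d n (\<lambda>y. poly Q (y j))"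
proof -
  have eq: "(\<lambda>y. poly Q (y j))
      = (\<lambda>y. \<Sum>m\<le>degree Q. coeff Q m * monomial d (\<lambda>i. if i = j then m else 0) y)"
    unfolding poly_altdef monomial_single[OF assms(2)] ..
  have "poly_deg_le d n (\<lambda>y. \<Sum>m\<le>degree Q. coeff Q m * monomial d (\<lambda>i. if i = j then m else 0) y)"
  proof (intro poly_deg_le_sum poly_deg_le_cmult poly_deg_le_monomial)
    fix m assume "m \<in> {..degree Q}"
    then have "m \<le> n" using assms by auto
    moreover have "(\<Sum>i<d. (if i = j then m else 0)) = m"
      using assms(2) by (simp add: sum.delta)
    ultimately show "(\<lambda>i. if i = j then m else 0) \<in> exps d n" unfolding exps_def by auto
  qed auto
  then show ?thesis using eq by simp
qed

lemma continuous_on_poly_simplex_pt: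
  assumes "poly_deg_le d n p"
  shows "continuous_on UNIV (\<lambda>z::nat\<Rightarrow>real. p (simplex_pt d z))"
proof -
  obtain c where p: "p = (\<lambda>x. \<Sum>k\<in>exps d n. c k * monomial d k x)"
    using assms unfolding poly_deg_le_iff by auto
  show ?thesis unfolding p monomial_def by (intro continuous_intros continuous_on_simplex_pt)
qed

definition segment_poly :: "nat \<Rightarrow> ((nat \<Rightarrow> real) \<Rightarrow> real) \<Rightarrow> real poly \<Rightarrow> bool" where
  "segment_poly n f Q \<longleftrightarrow> degree Q \<le> n \<and> (\<forall>u. f (pt2 u) = poly Q u)"

lemma poly_deg_le_2_segment_poly:
  assumes "poly_deg_le 2 n P"
  shows "\<exists>Q. segment_poly n P Q"
proof -
  obtain c where P: "P = (\<lambda>x. \<Sum>k\<in>exps 2 n. c k * monomial 2 k x)"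
    using assms unfolding poly_deg_le_iff by auto
  define Q where "Q = (\<Sum>k\<in>exps 2 n. smult (c k) ([:0,1:] ^ k 0 * [:1,-1:] ^ k 1))"
  have deg: "degree Q \<le> n" unfolding Q_def
  proof (rule degree_sum_le[OF finite_exps])
    fix k assume k: "k \<in> exps 2 n"
    have "degree (smult (c k) ([:0,1:] ^ k 0 * [:1,-1:] ^ k 1))
        \<le> degree (([:0::real,1:] ^ k 0 * [:1,-1:] ^ k 1))"
      by (rule degree_smult_le)
    also have "\<dots> \<le> degree ([:0::real,1:] ^ k 0) + degree ([:1::real,-1:] ^ k 1)"
      by (rule degree_mult_le)
    also have "\<dots> \<le> k 0 + k 1"
      using degree_power_le[of "[:0::real,1:]" "k 0"] degree_power_le[of "[:1::real,-1:]" "k 1"]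
        by simp
    also have "\<dots> \<le> n" using k unfolding exps_def by (simp add: numeral_2_eq_2)
    finally show "degree (smult (c k) ([:0,1:] ^ k 0 * [:1,-1:] ^ k 1)) \<le> n" .
  qed
  have "P (pt2 u) = poly Q u" for u
  proof -
    have "monomial 2 k (pt2 u) = u ^ k 0 * (1 - u) ^ k 1" for k
      unfolding monomial_def pt2_def by (simp add: numeral_2_eq_2)
    then show ?thesis unfolding P Q_def poly_sum by (simp add: poly_power algebra_simps)
  qed
  then show ?thesis using deg unfolding segment_poly_def by auto
qed

lemma segment_poly_add:
  "segment_poly n f Q \<Longrightarrow> segment_poly n g R \<Longrightarrow> segment_poly n (\<lambda>x. f x + g x) (Q + R)"
  unfolding segment_poly_def by (auto intro: degree_add_le)

lemma segment_poly_cmult: "segment_poly n f Q \<Longrightarrow> segment_poly n (\<lambda>x. a * f x) (smult a Q)"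
  unfolding segment_poly_def by (auto intro: order_trans[OF degree_smult_le])

lemma segment_poly_sum:
  "finite I \<Longrightarrow> (\<And>i. i \<in> I \<Longrightarrow> segment_poly n (f i) (Q i))
      \<Longrightarrow> segment_poly n (\<lambda>x. \<Sum>i\<in>I. f i x) (\<Sum>i\<in>I. Q i)"
proof (induction I rule: finite_induct)
  case empty then show ?case unfolding segment_poly_def by simp
next
  case (insert a I) then show ?case using segment_poly_add[of n "f a" "Q a"] by simp
qed

lemma pt2_coord: "x \<in> std_simplex 2 \<Longrightarrow> x = pt2 (x 0)"
  unfolding std_simplex_def pt2_def by (auto simp: fun_eq_iff numeral_2_eq_2)

lemma pt2_in_std_simplex: "0 \<le> u \<Longrightarrow> u \<le> 1 \<Longrightarrow> pt2 u \<in> std_simplex 2"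
  unfolding std_simplex_def pt2_def by (auto simp: numeral_2_eq_2)

section \<open>The open simplex\<close>

definition simplex_interior :: "nat \<Rightarrow> (nat \<Rightarrow> real) set" where
  "simplex_interior d = {z. (\<forall>i<d - 1. 0 < z i) \<and> (\<Sum>i<d - 1. z i) < 1}"

lemma open_simplex_interior: "open (simplex_interior d)"
proof -
  have coord: "open ((\<lambda>z::nat\<Rightarrow>real. z i) -` {0<..})" for i
  proof -
    have "isCont (\<lambda>z::nat\<Rightarrow>real. z i) x" for x
      using continuous_on_product_coordinates[of i] continuous_on_eq_continuous_at[of UNIV] by blast
    then show ?thesis by (intro continuous_open_vimage) auto
  qed
  have "open ((\<lambda>z::nat\<Rightarrow>real. \<Sum>i<d - 1. z i) -` {..<1})"
    by (intro continuous_open_vimage continuous_intros) auto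
  moreover have "simplex_interior d
      = (\<Inter>i<d - 1. (\<lambda>z. z i) -` {0<..}) \<inter> (\<lambda>z. \<Sum>i<d - 1. z i) -` {..<1}"
    unfolding simplex_interior_def by auto
  ultimately show ?thesis using coord by (auto intro!: open_Int open_INT)
qed

lemma dir_weight_pos:
  assumes "z \<in> simplex_interior d"
  shows "dir_weight d \<alpha> z > 0"
proof -
  have "z \<in> simplex_region d"
    using assms unfolding simplex_interior_def simplex_region_def by (auto simp: less_imp_le)
  moreover have "\<forall>i\<in>{..<d}. simplex_pt d z i powr (\<alpha> i - 1) > 0"
  proof
    fix i assume "i \<in> {..<d}"
    then have "simplex_pt d z i > 0"
      using assms unfolding simplex_interior_def simplex_pt_def by auto
    then show "simplex_pt d z i powr (\<alpha> i - 1) > 0" by simp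
  qed
  then have "(\<Prod>i<d. simplex_pt d z i powr (\<alpha> i - 1)) > 0" by (intro prod_pos) blast
  ultimately show ?thesis unfolding dir_weight_def by simp
qed

text \<open>Move from x0 slightly towards the barycentre.\<close>

lemma simplex_interior_nonzero:
  fixes g :: "(nat \<Rightarrow> real) \<Rightarrow> real"
  assumes d: "d \<ge> 1" and g: "continuous_on UNIV g"
    and x0: "x0 \<in> std_simplex d" and gx0: "g x0 \<noteq> 0"
  shows "\<exists>z\<in>simplex_interior d. g z \<noteq> 0"
proof -
  define N where "N = d - 1"
  define zt where "zt = (\<lambda>t::real. \<lambda>i. (1-t) * x0 i + t / real d)"
  have "continuous_on UNIV zt" unfolding zt_def using d by (intro continuous_intros) auto
  then have "continuous_on UNIV (g \<circ> zt)"
    by (rule continuous_on_compose) (use g in \<open>auto intro: continuous_on_subset\<close>)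
  then have "continuous (at 0) (g \<circ> zt)" by (simp add: continuous_on_eq_continuous_at comp_def)
  moreover have "(g \<circ> zt) 0 \<noteq> 0" using gx0 unfolding zt_def by simp
  ultimately obtain \<epsilon> where ep: "\<epsilon> > 0" "\<forall>t. dist 0 t < \<epsilon> \<longrightarrow> (g \<circ> zt) t \<noteq> 0"
    using continuous_at_avoid by blast
  define t where "t = min (\<epsilon>/2) (1/2)"
  have t: "0 < t" "t < 1" "dist 0 t < \<epsilon>" using ep unfolding t_def by (auto simp: dist_real_def)
  have x0nn: "\<forall>i<d. 0 \<le> x0 i" and x0s: "(\<Sum>i<d. x0 i) = 1" using x0 unfolding std_simplex_def by auto
  have pos: "\<forall>i<N. 0 < zt t i"
    unfolding zt_def using t x0nn d unfolding N_def by (auto intro!: add_nonneg_pos)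
  have "(\<Sum>i<N. x0 i) \<le> (\<Sum>i<d. x0 i)" unfolding N_def using x0nn by (intro sum_mono2) auto
  then have sN: "(\<Sum>i<N. x0 i) \<le> 1" using x0s by simp
  have "real N / real d < 1" unfolding N_def using d by (auto simp: field_simps of_nat_diff)
  then have "t * (real N / real d) < t" using t mult_strict_left_mono[of "real N / real d" 1 t]
    by simp
  moreover have "(1-t) * (\<Sum>i<N. x0 i) \<le> 1 - t" using t sN mult_left_mono[of "\<Sum>i<N. x0 i" 1 "1-t"]
    by simp
  moreover have "(\<Sum>i<N. zt t i) = (1-t) * (\<Sum>i<N. x0 i) + t * (real N / real d)"
    unfolding zt_def by (simp add: sum.distrib sum_distrib_left)
  ultimately have "(\<Sum>i<N. zt t i) < 1" by linarith
  with pos have "zt t \<in> simplex_interior d" unfolding simplex_interior_def N_def by blast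
  moreover have "g (zt t) \<noteq> 0" using ep t by auto
  ultimately show ?thesis by blast
qed

lemma open_contains_coordinate_box:
  fixes U :: "(nat \<Rightarrow> real) set" and N :: nat
  assumes "open U" "z1 \<in> U"
  shows "\<exists>e. (\<forall>i<N. e i > 0) \<and>
    (\<forall>z. (\<forall>i<N. z i \<in> {z1 i - e i <..< z1 i + e i}) \<longrightarrow> (\<lambda>i. if i < N then z i else z1 i) \<in> U)"
proof -
  obtain X where X: "z1 \<in> PiE UNIV X" "\<forall>i. openin euclidean (X i)" "PiE UNIV X \<subseteq> U"
    using product_topology_open_contains_basis[of "\<lambda>i. euclidean" UNIV U z1] assms
    unfolding open_fun_def by auto
  have "\<forall>i<N. \<exists>e>0. ball (z1 i) e \<subseteq> X i"
  proof (intro allI impI)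
    fix i
    have "z1 i \<in> X i" using X(1) by (rule PiE_mem) simp
    moreover have "open (X i)" using X(2) open_openin by blast
    ultimately show "\<exists>e>0. ball (z1 i) e \<subseteq> X i" using open_contains_ball_eq by blast
  qed
  then obtain e where e: "\<forall>i<N. e i > 0 \<and> ball (z1 i) (e i) \<subseteq> X i" by metis
  have "(\<lambda>i. if i < N then z i else z1 i) \<in> U"
    if z: "\<forall>i<N. z i \<in> {z1 i - e i <..< z1 i + e i}" for z
  proof -
    have "z i \<in> X i" if "i < N" for i
    proof -
      have "z i \<in> ball (z1 i) (e i)" using z that by (auto simp: dist_real_def abs_less_iff)
      then show ?thesis using e that by blast
    qed
    then have "(\<lambda>i. if i < N then z i else z1 i) \<in> PiE UNIV X" using X(1) by (auto simp: PiE_iff)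
    then show ?thesis using X(3) by auto
  qed
  then show ?thesis using e by blast
qed

lemma emeasure_coordinate_box_pos:
  fixes N :: nat and c e :: "nat \<Rightarrow> real"
  assumes "\<forall>i<N. e i > 0"
  shows "emeasure (Pi\<^sub>M {..<N} (\<lambda>_. lborel)) (PiE {..<N} (\<lambda>i. {c i - e i <..< c i + e i})) > 0"
proof -
  interpret product_sigma_finite "\<lambda>_::nat. lborel::real measure" by standard
  have "emeasure (Pi\<^sub>M {..<N} (\<lambda>_. lborel)) (PiE {..<N} (\<lambda>i. {c i - e i <..< c i + e i}))
      = (\<Prod>i<N. emeasure lborel {c i - e i <..< c i + e i})"
    by (subst emeasure_PiM) auto
  also have "\<dots> = (\<Prod>i<N. ennreal (2 * e i))"
    using assms by (intro prod.cong refl) (auto simp: less_imp_le)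
  also have "\<dots> = ennreal (\<Prod>i<N. 2 * e i)"
    using assms by (intro prod_ennreal) (auto simp: less_imp_le)
  also have "\<dots> > 0" using assms by (auto intro!: prod_pos)
  finally show ?thesis .
qed

section \<open>The Dirichlet inner product and its kernel\<close>

locale dirichlet =
  fixes d :: nat and \<alpha> :: "nat \<Rightarrow> real"
  assumes alpha_pos: "\<forall>i<d. \<alpha> i > 0" and dim_pos: "d \<ge> 1"
begin

lemma nn_integral_moment:
  "(\<integral>\<^sup>+z. ennreal (monomial d k (simplex_pt d z) * dir_weight d \<alpha> z) \<partial>leb_coords d)
     = ennreal (multi_beta d (\<lambda>i. \<alpha> i + real (k i)))"
proof -
  obtain N where d: "d = Suc N" using dim_pos by (cases d) auto
  have "(\<integral>\<^sup>+z. ennreal (monomial d k (simplex_pt d z) * dir_weight d \<alpha> z) \<partial>leb_coords d)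
      = (\<integral>\<^sup>+z. ennreal (dirichlet_density N (\<lambda>i. \<alpha> i + real (k i)) (\<alpha> N + real (k N)) 1 z)
          \<partial>Pi\<^sub>M {..<N} (\<lambda>_. lborel))"
    unfolding leb_coords_def monomial_mult_dir_weight[OF dim_pos] unfolding d by simp
  also have "\<dots> = ennreal (multi_beta d (\<lambda>i. \<alpha> i + real (k i)))"
    by (subst nn_integral_dirichlet_density)
      (use alpha_pos in \<open>auto simp: d multi_beta_def add_pos_nonneg add.commute\<close>)
  finally show ?thesis .
qed

lemma
  shows integrable_moment: "integrable (leb_coords d) (\<lambda>z. monomial d k (simplex_pt d z) * dir_weight d \<alpha> z)"
    and integral_moment:
      "(\<integral>z. monomial d k (simplex_pt d z) * dir_weight d \<alpha> z \<partial>leb_coords d)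
          = multi_beta d (\<lambda>i. \<alpha> i + real (k i))"
proof -
  have nn: "0 \<le> monomial d k (simplex_pt d z) * dir_weight d \<alpha> z" for z
    unfolding monomial_mult_dir_weight[OF dim_pos] by (rule dirichlet_density_nonneg)
  have m: "(\<lambda>z. monomial d k (simplex_pt d z) * dir_weight d \<alpha> z) \<in> borel_measurable (leb_coords d)"
    using dim_pos by measurable
  have pos: "multi_beta d (\<lambda>i. \<alpha> i + real (k i)) > 0"
    using alpha_pos dim_pos by (intro multi_beta_pos) (auto intro: add_pos_nonneg)
  show "integrable (leb_coords d) (\<lambda>z. monomial d k (simplex_pt d z) * dir_weight d \<alpha> z)"
    using nn_integral_moment nn m by (intro integrableI_nonneg) auto
  show "(\<integral>z. monomial d k (simplex_pt d z) * dir_weight d \<alpha> z \<partial>leb_coords d)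
      = multi_beta d (\<lambda>i. \<alpha> i + real (k i))"
    using nn_integral_moment nn m pos by (subst integral_eq_nn_integral) auto
qed

lemma
  shows integrable_dir_weight: "integrable (leb_coords d) (dir_weight d \<alpha>)"
    and integral_dir_weight: "(\<integral>z. dir_weight d \<alpha> z \<partial>leb_coords d) = multi_beta d \<alpha>"
  using integrable_moment[of "\<lambda>_. 0"] integral_moment[of "\<lambda>_. 0"] by auto

lemma multi_beta_alpha_pos: "multi_beta d \<alpha> > 0"
  using alpha_pos dim_pos by (rule multi_beta_pos)

lemma dir_expect_altdef:
  "dir_expect d \<alpha> f = (\<integral>z. f (simplex_pt d z) * dir_weight d \<alpha> z \<partial>leb_coords d) / multi_beta d \<alpha>"
  unfolding dir_expect_def integral_dir_weight ..

lemma dir_expect_monomial: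
  "dir_expect d \<alpha> (monomial d k) = multi_beta d (\<lambda>i. \<alpha> i + real (k i)) / multi_beta d \<alpha>"
  unfolding dir_expect_altdef integral_moment ..

lemma integrable_bounded_measurable:
  assumes "bounded_measurable d f"
  shows "integrable (leb_coords d) (\<lambda>z. f (simplex_pt d z) * dir_weight d \<alpha> z)"
proof -
  obtain B where B: "\<forall>x\<in>std_simplex d. \<bar>f x\<bar> \<le> B"
    and m: "(\<lambda>z. f (simplex_pt d z)) \<in> borel_measurable (leb_coords d)"
    using assms unfolding bounded_measurable_def by auto
  have bound: "norm (f (simplex_pt d z) * dir_weight d \<alpha> z) \<le> norm (B * dir_weight d \<alpha> z)" for z
  proof (cases "z \<in> simplex_region d")
    case True
    then have "\<bar>f (simplex_pt d z)\<bar> \<le> B" using B simplex_pt_in_std_simplex[OF dim_pos] by auto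
    then show ?thesis using dir_weight_nonneg[of d \<alpha> z]
      by (auto simp: abs_mult intro!: mult_right_mono)
  next
    case False then show ?thesis by (simp add: dir_weight_outside)
  qed
  show ?thesis
  proof (rule Bochner_Integration.integrable_bound)
    show "AE z in leb_coords d. norm (f (simplex_pt d z) * dir_weight d \<alpha> z)
        \<le> norm (B * dir_weight d \<alpha> z)"
      using bound by (intro AE_I2)
    show "integrable (leb_coords d) (\<lambda>z. B * dir_weight d \<alpha> z)"
      using integrable_dir_weight by auto
    show "(\<lambda>z. f (simplex_pt d z) * dir_weight d \<alpha> z) \<in> borel_measurable (leb_coords d)"
      using m dir_weight_measurable[OF dim_pos] by measurable
  qed
qed

lemma dir_expect_add:
  assumes "bounded_measurable d f" "bounded_measurable d g"
  shows "dir_expect d \<alpha> (\<lambda>x. f x + g x) = dir_expect d \<alpha> f + dir_expect d \<alpha> g"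
  unfolding dir_expect_altdef distrib_right
  by (subst Bochner_Integration.integral_add)
    (auto intro!: integrable_bounded_measurable assms simp: add_divide_distrib)

lemma dir_expect_cmult: "dir_expect d \<alpha> (\<lambda>x. c * f x) = c * dir_expect d \<alpha> f"
  unfolding dir_expect_altdef by (simp add: mult.assoc)

lemma dir_expect_sum:
  assumes "finite I" "\<And>i. i \<in> I \<Longrightarrow> bounded_measurable d (f i)"
  shows "dir_expect d \<alpha> (\<lambda>x. \<Sum>i\<in>I. f i x) = (\<Sum>i\<in>I. dir_expect d \<alpha> (f i))"
  using assms
proof (induction I rule: finite_induct)
  case empty
  then show ?case unfolding dir_expect_def by simp
next
  case (insert a I)
  then show ?case by (simp add: dir_expect_add bounded_measurable_sum)
qed

lemma dir_expect_nonneg: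
  assumes "\<forall>x\<in>std_simplex d. f x \<ge> 0"
  shows "dir_expect d \<alpha> f \<ge> 0"
proof -
  have "f (simplex_pt d z) * dir_weight d \<alpha> z \<ge> 0" for z
    by (cases "z \<in> simplex_region d")
      (use assms simplex_pt_in_std_simplex[OF dim_pos] dir_weight_nonneg[of d \<alpha> z] in \<open>auto simp: dir_weight_outside\<close>)
  then show ?thesis unfolding dir_expect_altdef using multi_beta_alpha_pos
    by (intro divide_nonneg_pos integral_nonneg_AE) auto
qed

text \<open>The Dirichlet density is positive on the open simplex, so a polynomial whose square has
  zero expectation vanishes on an open box there, hence everywhere on the simplex by continuity.\<close>

lemma poly_eq_0_if_dir_expect_square_eq_0:
  assumes p: "poly_deg_le d n p" and E0: "dir_expect d \<alpha> (\<lambda>x. p x * p x) = 0"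
    and x0: "x0 \<in> std_simplex d"
  shows "p x0 = 0"
proof (rule ccontr)
  assume "p x0 \<noteq> 0"
  define g where "g = (\<lambda>z. p (simplex_pt d z))"
  define F where "F = (\<lambda>z. g z * g z * dir_weight d \<alpha> z)"
  define U where "U = {z \<in> simplex_interior d. g z \<noteq> 0}"
  have g: "continuous_on UNIV g" unfolding g_def by (rule continuous_on_poly_simplex_pt[OF p])
  have "g x0 \<noteq> 0" unfolding g_def simplex_pt_id[OF x0 dim_pos] by fact
  then obtain z1 where z1: "z1 \<in> U"
    using simplex_interior_nonzero[OF dim_pos g x0] unfolding U_def by blast
  have "open U"
  proof -
    have "open (g -` (-{0}))"
      using g by (intro continuous_open_vimage) (auto simp: continuous_on_eq_continuous_at)
    moreover have "U = simplex_interior d \<inter> g -` (-{0})" unfolding U_def by auto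
    ultimately show ?thesis using open_simplex_interior by auto
  qed
  then obtain e where e: "\<forall>i<d - 1. e i > 0"
    and box: "\<forall>z. (\<forall>i<d - 1. z i \<in> {z1 i - e i <..< z1 i + e i})
        \<longrightarrow> (\<lambda>i. if i < d - 1 then z i else z1 i) \<in> U"
    using open_contains_coordinate_box[OF _ z1, of "d - 1"] by auto
  define A where "A = PiE {..<d - 1} (\<lambda>i. {z1 i - e i <..< z1 i + e i})"
  have F_pos: "F z > 0" if "z \<in> A" for z
  proof -
    define z' where "z' = (\<lambda>i. if i < d - 1 then z i else z1 i)"
    have agree: "\<And>i. i < d - 1 \<Longrightarrow> z' i = z i" unfolding z'_def by simp
    have "z' \<in> U" unfolding z'_def using that box by (auto simp: A_def PiE_iff)
    moreover have "g z' = g z" unfolding g_def using agree by (metis simplex_pt_cong)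
    moreover have "dir_weight d \<alpha> z' = dir_weight d \<alpha> z" using agree by (rule dir_weight_cong)
    moreover have "z' \<in> simplex_interior d \<longleftrightarrow> z \<in> simplex_interior d"
    proof -
      have "(\<Sum>i<d - 1. z' i) = (\<Sum>i<d - 1. z i)" using agree by (intro sum.cong) auto
      then show ?thesis unfolding simplex_interior_def using agree by auto
    qed
    ultimately show ?thesis
      unfolding F_def U_def using dir_weight_pos[of z d \<alpha>] by (auto simp: zero_less_mult_iff)
  qed
  have "(\<integral>z. F z \<partial>leb_coords d) = 0"
    using E0 multi_beta_alpha_pos unfolding dir_expect_altdef F_def g_def by simp
  moreover have "integrable (leb_coords d) F"
    using integrable_bounded_measurable[OF bounded_measurable_mult[OF
        poly_deg_le_bounded_measurable[OF p] poly_deg_le_bounded_measurable[OF p]]]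
    unfolding F_def g_def by simp
  moreover have "AE z in leb_coords d. 0 \<le> F z"
    unfolding F_def using dir_weight_nonneg by (intro AE_I2) simp
  ultimately have "AE z in leb_coords d. F z = 0"
    using integral_nonneg_eq_0_iff_AE by blast
  then have "AE z in leb_coords d. z \<notin> A" by eventually_elim (use F_pos in force)
  moreover have "A \<in> sets (leb_coords d)"
    unfolding A_def leb_coords_def by (intro sets_PiM_I_finite) auto
  ultimately have "emeasure (leb_coords d) A = 0"
    using AE_iff_measurable[of A "leb_coords d" "\<lambda>z. z \<notin> A"] sets.sets_into_space by blast
  moreover have "emeasure (leb_coords d) A > 0"
    unfolding A_def leb_coords_def using e by (rule emeasure_coordinate_box_pos)
  ultimately show False by simp
qed

lemma dir_inner_commute: "dir_inner d \<alpha> f g = dir_inner d \<alpha> g f"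
  unfolding dir_inner_def by (simp add: mult.commute)

lemma dir_inner_add_left:
  "bounded_measurable d f \<Longrightarrow> bounded_measurable d g \<Longrightarrow> bounded_measurable d h \<Longrightarrow>
   dir_inner d \<alpha> (\<lambda>x. f x + g x) h = dir_inner d \<alpha> f h + dir_inner d \<alpha> g h"
  unfolding dir_inner_def distrib_right by (rule dir_expect_add)
    (auto intro: bounded_measurable_mult)

lemma dir_inner_cmult_left: "dir_inner d \<alpha> (\<lambda>x. c * f x) h = c * dir_inner d \<alpha> f h"
  unfolding dir_inner_def mult.assoc by (rule dir_expect_cmult)

lemma dir_inner_sum_left:
  "finite I \<Longrightarrow> (\<And>i. i \<in> I \<Longrightarrow> bounded_measurable d (f i)) \<Longrightarrow> bounded_measurable d h \<Longrightarrow>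
   dir_inner d \<alpha> (\<lambda>x. \<Sum>i\<in>I. f i x) h = (\<Sum>i\<in>I. dir_inner d \<alpha> (f i) h)"
  unfolding dir_inner_def sum_distrib_right by (rule dir_expect_sum)
    (auto intro: bounded_measurable_mult)

lemma dir_inner_diff_left:
  "bounded_measurable d f \<Longrightarrow> bounded_measurable d g \<Longrightarrow> bounded_measurable d h \<Longrightarrow>
   dir_inner d \<alpha> (\<lambda>x. f x - g x) h = dir_inner d \<alpha> f h - dir_inner d \<alpha> g h"
  using dir_inner_add_left[of f "\<lambda>x. (-1) * g x" h] dir_inner_cmult_left[of "-1" g h]
    bounded_measurable_cmult[of d g "-1"] by simp

lemma dir_inner_cong_left:
  "\<forall>x\<in>std_simplex d. f x = f' x \<Longrightarrow> dir_inner d \<alpha> f h = dir_inner d \<alpha> f' h"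
  unfolding dir_inner_def by (rule dir_expect_cong[OF dim_pos]) auto

lemma dir_inner_self_nonneg: "dir_inner d \<alpha> f f \<ge> 0"
  unfolding dir_inner_def by (rule dir_expect_nonneg) auto

definition in_span :: "((nat \<Rightarrow> real) \<Rightarrow> real) list \<Rightarrow> ((nat \<Rightarrow> real) \<Rightarrow> real) \<Rightarrow> bool" where
  "in_span L f \<longleftrightarrow> (\<exists>c. \<forall>x\<in>std_simplex d. f x = (\<Sum>i<length L. c i * (L!i) x))"

definition orthonormal :: "((nat \<Rightarrow> real) \<Rightarrow> real) list \<Rightarrow> bool" where
  "orthonormal L \<longleftrightarrow>
     (\<forall>i<length L. \<forall>j<length L. dir_inner d \<alpha> (L!i) (L!j) = (if i = j then 1 else 0))"

text \<open>The inner product is only definite modulo functions vanishing on the simplex, which is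
  why spans and bases are compared there.\<close>

definition definite_subspace :: "(((nat \<Rightarrow> real) \<Rightarrow> real) \<Rightarrow> bool) \<Rightarrow> bool" where
  "definite_subspace P \<longleftrightarrow>
     P (\<lambda>x. 0) \<and> (\<forall>f g a b. P f \<longrightarrow> P g \<longrightarrow> P (\<lambda>x. a * f x + b * g x)) \<and>
     (\<forall>f. P f \<longrightarrow> bounded_measurable d f) \<and>
     (\<forall>f. P f \<longrightarrow> dir_inner d \<alpha> f f = 0 \<longrightarrow> (\<forall>x\<in>std_simplex d. f x = 0))"

lemma definite_subspace_poly_deg_le: "definite_subspace (poly_deg_le d m)"
  unfolding definite_subspace_def dir_inner_def
  using poly_eq_0_if_dir_expect_square_eq_0
  by (auto intro: poly_deg_le_zero poly_deg_le_add poly_deg_le_cmult poly_deg_le_bounded_measurable)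

lemma in_span_append: "in_span L f \<Longrightarrow> in_span (L @ M) f"
  unfolding in_span_def
proof (elim exE)
  fix c assume c: "\<forall>x\<in>std_simplex d. f x = (\<Sum>i<length L. c i * (L!i) x)"
  have "(\<Sum>i<length (L@M). (if i < length L then c i else 0) * ((L@M)!i) x)
      = (\<Sum>i<length L. c i * (L!i) x)" for x
    by (rule sum.mono_neutral_cong_right) (auto simp: nth_append)
  then show "\<exists>c. \<forall>x\<in>std_simplex d. f x = (\<Sum>i<length (L@M). c i * ((L@M)!i) x)"
    using c by (intro exI[of _ "\<lambda>i. if i < length L then c i else 0"]) auto
qed

lemma in_span_add: "in_span L f \<Longrightarrow> in_span L g \<Longrightarrow> in_span L (\<lambda>x. f x + g x)"
  unfolding in_span_def
proof (elim exE)
  fix c e assume c: "\<forall>x\<in>std_simplex d. f x = (\<Sum>i<length L. c i * (L!i) x)"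
    and e: "\<forall>x\<in>std_simplex d. g x = (\<Sum>i<length L. e i * (L!i) x)"
  show "\<exists>c. \<forall>x\<in>std_simplex d. f x + g x = (\<Sum>i<length L. c i * (L!i) x)"
    using c e by (intro exI[of _ "\<lambda>i. c i + e i"]) (simp add: sum.distrib distrib_right)
qed

lemma in_span_cmult: "in_span L f \<Longrightarrow> in_span L (\<lambda>x. a * f x)"
  unfolding in_span_def
proof (elim exE)
  fix c assume c: "\<forall>x\<in>std_simplex d. f x = (\<Sum>i<length L. c i * (L!i) x)"
  show "\<exists>c. \<forall>x\<in>std_simplex d. a * f x = (\<Sum>i<length L. c i * (L!i) x)"
    using c by (intro exI[of _ "\<lambda>i. a * c i"]) (simp add: sum_distrib_left mult.assoc)
qed

lemma in_span_zero: "in_span L (\<lambda>x. 0)"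
  unfolding in_span_def by (intro exI[of _ "\<lambda>i. 0"]) simp

lemma in_span_sum: "finite I \<Longrightarrow> (\<And>i. i \<in> I \<Longrightarrow> in_span L (f i)) \<Longrightarrow> in_span L (\<lambda>x. \<Sum>i\<in>I. f i x)"
  by (induction I rule: finite_induct) (auto intro: in_span_add in_span_zero)

lemma in_span_poly_deg_le:
  assumes "poly_deg_le d m q" "\<And>k. k \<in> exps d m \<Longrightarrow> in_span L (monomial d k)"
  shows "in_span L q"
proof -
  obtain c where q: "q = (\<lambda>x. \<Sum>k\<in>exps d m. c k * monomial d k x)"
    using assms(1) unfolding poly_deg_le_iff by auto
  show ?thesis unfolding q by (intro in_span_sum in_span_cmult assms(2) finite_exps)
qed

lemma dir_inner_lincomb_left:
  assumes "\<forall>f\<in>set L. bounded_measurable d f" "bounded_measurable d h"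
    and "\<forall>x\<in>std_simplex d. f x = (\<Sum>i<length L. c i * (L!i) x)"
  shows "dir_inner d \<alpha> f h = (\<Sum>i<length L. c i * dir_inner d \<alpha> (L!i) h)"
proof -
  have "dir_inner d \<alpha> f h = dir_inner d \<alpha> (\<lambda>x. \<Sum>i<length L. c i * (L!i) x) h"
    using assms(3) by (rule dir_inner_cong_left)
  also have "\<dots> = (\<Sum>i<length L. dir_inner d \<alpha> (\<lambda>x. c i * (L!i) x) h)"
    using assms(1,2) by (intro dir_inner_sum_left) (auto intro: bounded_measurable_cmult)
  also have "\<dots> = (\<Sum>i<length L. c i * dir_inner d \<alpha> (L!i) h)" by (simp add: dir_inner_cmult_left)
  finally show ?thesis .
qed

lemma dir_inner_orthonormal_coeff:
  assumes "orthonormal L" "\<forall>f\<in>set L. bounded_measurable d f"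
    and "\<forall>x\<in>std_simplex d. f x = (\<Sum>i<length L. c i * (L!i) x)" "l < length L"
  shows "dir_inner d \<alpha> f (L!l) = c l"
proof -
  have "dir_inner d \<alpha> f (L!l) = (\<Sum>i<length L. c i * dir_inner d \<alpha> (L!i) (L!l))"
    using assms(2-4) by (intro dir_inner_lincomb_left) auto
  also have "\<dots> = (\<Sum>i<length L. c i * (if i = l then 1 else 0))"
    using assms(1,4) unfolding orthonormal_def by (intro sum.cong refl) auto
  also have "\<dots> = c l" using assms(4) by (simp add: if_distrib sum.delta cong: if_cong)
  finally show ?thesis .
qed

lemma orthonormal_append_D:
  assumes "orthonormal (L @ M)"
  shows "orthonormal M" and "\<And>i l. i < length L \<Longrightarrow> l < length M \<Longrightarrow> dir_inner d \<alpha> (L!i) (M!l) = 0"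
proof -
  have o: "dir_inner d \<alpha> ((L@M)!i) ((L@M)!j) = (if i = j then 1 else 0)"
    if "i < length L + length M" "j < length L + length M" for i j
    using assms that unfolding orthonormal_def by simp
  show "orthonormal M" unfolding orthonormal_def
    using o[of "length L + i" "length L + j" for i j] by (auto simp: nth_append)
  show "dir_inner d \<alpha> (L!i) (M!l) = 0" if "i < length L" "l < length M" for i l
    using o[of i "length L + l"] that by (simp add: nth_append)
qed

lemma orthonormal_snoc:
  assumes "orthonormal Q" "\<forall>l<length Q. dir_inner d \<alpha> e (Q!l) = 0" "dir_inner d \<alpha> e e = 1"
  shows "orthonormal (Q @ [e])"
  unfolding orthonormal_def
proof (intro allI impI)
  fix i j assume i: "i < length (Q @ [e])" and j: "j < length (Q @ [e])"
  have Qe: "dir_inner d \<alpha> (Q!l) e = 0" if "l < length Q" for l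
    using assms(2) that dir_inner_commute by metis
  show "dir_inner d \<alpha> ((Q @ [e]) ! i) ((Q @ [e]) ! j) = (if i = j then 1 else 0)"
    using i j assms(1,2,3) Qe unfolding orthonormal_def
    by (cases "i < length Q"; cases "j < length Q") (auto simp: nth_append less_Suc_eq)
qed

context
  fixes P :: "((nat \<Rightarrow> real) \<Rightarrow> real) \<Rightarrow> bool"
  assumes P: "definite_subspace P"
begin

lemma definite_subspace_lincomb:
  "finite I \<Longrightarrow> (\<And>i. i \<in> I \<Longrightarrow> P (f i)) \<Longrightarrow> P (\<lambda>x. \<Sum>i\<in>I. a i * f i x)"
proof (induction I rule: finite_induct)
  case empty then show ?case using P unfolding definite_subspace_def by simp
next
  case (insert i I)
  then have "P (\<lambda>x. a i * f i x + 1 * (\<Sum>i\<in>I. a i * f i x))"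
    using P unfolding definite_subspace_def by blast
  then show ?case using insert by simp
qed

text \<open>One Gram--Schmidt step: subtract from b its projection onto Q; the remainder is either
  zero on the simplex or can be normalised.\<close>

lemma gram_schmidt_step:
  assumes Q: "set Q \<subseteq> Collect P" "orthonormal Q" and b: "P b"
  shows "\<exists>R. set R \<subseteq> Collect P \<and> orthonormal (Q @ R) \<and> in_span (Q @ R) b"
proof -
  have PV: "bounded_measurable d f" if "P f" for f
    using P that unfolding definite_subspace_def by blast
  have PQ: "P (Q!i)" if "i < length Q" for i using Q(1) nth_mem[OF that] by auto
  have VQ: "\<forall>f\<in>set Q. bounded_measurable d f" using Q(1) PV by auto
  define c where "c = (\<lambda>i. dir_inner d \<alpha> b (Q!i))"
  define pr where "pr = (\<lambda>x. \<Sum>i<length Q. c i * (Q!i) x)"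
  define r where "r = (\<lambda>x. b x - pr x)"
  have Ppr: "P pr" unfolding pr_def by (rule definite_subspace_lincomb) (auto intro: PQ)
  have "P (\<lambda>x. 1 * b x + (-1) * pr x)" using P b Ppr unfolding definite_subspace_def by blast
  then have Pr: "P r" unfolding r_def by simp
  have r_orth: "dir_inner d \<alpha> r (Q!l) = 0" if "l < length Q" for l
  proof -
    have "dir_inner d \<alpha> pr (Q!l) = c l"
      using dir_inner_orthonormal_coeff[OF Q(2) VQ _ that, of pr c] unfolding pr_def by simp
    moreover have "dir_inner d \<alpha> r (Q!l) = dir_inner d \<alpha> b (Q!l) - dir_inner d \<alpha> pr (Q!l)"
      unfolding r_def using PV[OF b] PV[OF Ppr] PV[OF PQ[OF that]] by (rule dir_inner_diff_left)
    ultimately show ?thesis unfolding c_def by simp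
  qed
  show ?thesis
  proof (cases "dir_inner d \<alpha> r r = 0")
    case True
    then have "\<forall>x\<in>std_simplex d. r x = 0" using P Pr unfolding definite_subspace_def by blast
    then have "in_span Q b" unfolding in_span_def r_def pr_def by (intro exI[of _ c]) auto
    then show ?thesis using Q by (intro exI[of _ "[]"]) auto
  next
    case False
    define s where "s = sqrt (dir_inner d \<alpha> r r)"
    have s: "s > 0" "s * s = dir_inner d \<alpha> r r"
      unfolding s_def using False dir_inner_self_nonneg[of r] by auto
    define e where "e = (\<lambda>x. (1/s) * r x)"
    have "P (\<lambda>x. (1/s) * r x + 0 * r x)" using P Pr unfolding definite_subspace_def by blast
    then have Pe: "P e" unfolding e_def by simp
    have "dir_inner d \<alpha> e e = (1/s) * dir_inner d \<alpha> r e"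
      unfolding e_def by (rule dir_inner_cmult_left)
    also have "dir_inner d \<alpha> r e = dir_inner d \<alpha> e r" by (rule dir_inner_commute)
    also have "\<dots> = (1/s) * dir_inner d \<alpha> r r" unfolding e_def by (rule dir_inner_cmult_left)
    finally have "dir_inner d \<alpha> e e = 1" using s False by (simp add: field_simps)
    moreover have "\<forall>l<length Q. dir_inner d \<alpha> e (Q!l) = 0"
      unfolding e_def dir_inner_cmult_left using r_orth by simp
    ultimately have "orthonormal (Q @ [e])" using Q(2) by (intro orthonormal_snoc)
    moreover have "in_span (Q @ [e]) b" unfolding in_span_def
    proof (intro exI[of _ "\<lambda>i. if i < length Q then c i else s"] ballI)
      fix x
      have "(\<Sum>i<length (Q @ [e]). (if i < length Q then c i else s) * ((Q @ [e]) ! i) x)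
          = (\<Sum>i<length Q. c i * (Q!i) x) + s * e x"
        by (simp add: nth_append)
      also have "\<dots> = b x" unfolding e_def r_def pr_def using s by simp
      finally show "b x
          = (\<Sum>i<length (Q @ [e]). (if i < length Q then c i else s) * ((Q @ [e]) ! i) x)"
        by simp
    qed
    ultimately show ?thesis using Q Pe by (intro exI[of _ "[e]"]) auto
  qed
qed

lemma gram_schmidt:
  assumes "set Q \<subseteq> Collect P" "orthonormal Q" "set B \<subseteq> Collect P"
  shows "\<exists>R. set R \<subseteq> Collect P \<and> orthonormal (Q @ R) \<and> (\<forall>b\<in>set B. in_span (Q @ R) b)"
  using assms
proof (induction B arbitrary: Q)
  case Nil
  then show ?case by (intro exI[of _ "[]"]) auto
next
  case (Cons b B)
  have "P b" using Cons.prems(3) by simp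
  then obtain R where R: "set R \<subseteq> Collect P" "orthonormal (Q @ R)" "in_span (Q @ R) b"
    using gram_schmidt_step[OF Cons.prems(1,2)] by blast
  obtain R' where R': "set R' \<subseteq> Collect P" "orthonormal ((Q @ R) @ R')"
    "\<forall>b\<in>set B. in_span ((Q @ R) @ R') b"
    using Cons.IH[of "Q @ R"] Cons.prems(1,3) R(1,2) by auto
  show ?case
    using R R' in_span_append[OF R(3), of R'] by (intro exI[of _ "R @ R'"]) auto
qed

end

lemma in_span_append_orth:
  assumes "orthonormal (L @ M)" "\<forall>f\<in>set (L @ M). bounded_measurable d f"
    and "in_span (L @ M) p" "\<forall>i<length L. dir_inner d \<alpha> p (L!i) = 0"
  shows "in_span M p"
proof -
  obtain c where c: "\<forall>x\<in>std_simplex d. p x = (\<Sum>i<length (L @ M). c i * ((L @ M)!i) x)"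
    using assms(3) unfolding in_span_def by auto
  have c0: "c i = 0" if "i < length L" for i
    using dir_inner_orthonormal_coeff[OF assms(1,2) c, of i] assms(4) that by (simp add: nth_append)
  have split: "(\<Sum>i<length L + n. g i) = (\<Sum>i<length L. g i) + (\<Sum>i<n. g (length L + i))"
    for n and g :: "nat \<Rightarrow> real"
    by (induction n) auto
  have "(\<Sum>i<length L + length M. c i * ((L @ M)!i) x)
      = (\<Sum>i<length M. c (length L + i) * (M ! i) x)" for x
    unfolding split by (simp add: c0 nth_append)
  then show ?thesis unfolding in_span_def using c by (intro exI[of _ "\<lambda>i. c (length L + i)"]) auto
qed

lemma lower_degree_orthonormal_basis:
  obtains R where "orthonormal R" "\<forall>r\<in>set R. \<exists>m<n. poly_deg_le d m r"
    "\<And>m q. m < n \<Longrightarrow> poly_deg_le d m q \<Longrightarrow> in_span R q"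
proof (cases n)
  case 0
  then show ?thesis using that[of "[]"] unfolding orthonormal_def by auto
next
  case (Suc m)
  obtain Ls where Ls: "set Ls = monomial d ` exps d m"
    using finite_list[of "monomial d ` exps d m"] finite_exps by auto
  have "set Ls \<subseteq> Collect (poly_deg_le d m)" unfolding Ls by (auto intro: poly_deg_le_monomial)
  then obtain R where R: "set R \<subseteq> Collect (poly_deg_le d m)" "orthonormal R" "\<forall>b\<in>set Ls. in_span R b"
    using gram_schmidt[OF definite_subspace_poly_deg_le[of m], of "[]" Ls]
      unfolding orthonormal_def by auto
  show ?thesis
  proof (rule that[OF R(2)])
    show "\<forall>r\<in>set R. \<exists>m<n. poly_deg_le d m r" using R(1) Suc by auto
    show "in_span R q" if "m' < n" "poly_deg_le d m' q" for m' q
    proof (rule in_span_poly_deg_le)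
      show "poly_deg_le d m q" using that Suc poly_deg_le_mono[of m' m d q] by simp
    qed (use R(3) Ls in auto)
  qed
qed

lemma is_onb_exists: "\<exists>Ps. is_onb d \<alpha> n Ps"
proof -
  obtain R0 where R0: "orthonormal R0" "\<forall>r\<in>set R0. \<exists>m<n. poly_deg_le d m r"
    "\<And>m q. m < n \<Longrightarrow> poly_deg_le d m q \<Longrightarrow> in_span R0 q"
    using lower_degree_orthonormal_basis[where n = n] by blast
  have R0n: "set R0 \<subseteq> Collect (poly_deg_le d n)"
    using R0(2) poly_deg_le_mono[of _ n d] by (auto dest: less_imp_le)
  obtain Bs where Bs: "set Bs = monomial d ` exps d n"
    using finite_list[of "monomial d ` exps d n"] finite_exps by auto
  obtain R1 where R1: "set R1 \<subseteq> Collect (poly_deg_le d n)" "orthonormal (R0 @ R1)"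
    "\<forall>b\<in>set Bs. in_span (R0 @ R1) b"
    using gram_schmidt[OF definite_subspace_poly_deg_le[of n] R0n R0(1), of Bs] Bs
    by (auto intro: poly_deg_le_monomial)
  have V: "\<forall>f\<in>set (R0 @ R1). bounded_measurable d f"
    using R0n R1(1) by (auto intro: poly_deg_le_bounded_measurable)
  have R1_orth: "r \<in> orth_space d \<alpha> n" if r: "r \<in> set R1" for r
  proof -
    obtain l where l: "l < length R1" "r = R1!l" using r by (metis in_set_conv_nth)
    have "dir_inner d \<alpha> r q = 0" if q: "m < n" "poly_deg_le d m q" for m q
    proof -
      obtain c where c: "\<forall>x\<in>std_simplex d. q x = (\<Sum>i<length R0. c i * (R0!i) x)"
        using R0(3)[OF q] unfolding in_span_def by auto
      have "dir_inner d \<alpha> r q = (\<Sum>i<length R0. c i * dir_inner d \<alpha> (R0!i) r)"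
        using V r c by (subst dir_inner_commute) (intro dir_inner_lincomb_left; auto)
      also have "\<dots> = 0" using orthonormal_append_D(2)[OF R1(2)] l by simp
      finally show ?thesis .
    qed
    then show ?thesis unfolding orth_space_def using R1(1) r by auto
  qed
  have R1_span: "in_span R1 p" if p: "p \<in> orth_space d \<alpha> n" for p
  proof (rule in_span_append_orth[OF R1(2) V])
    show "in_span (R0 @ R1) p"
      using p R1(3) Bs unfolding orth_space_def by (auto intro: in_span_poly_deg_le)
    show "\<forall>i<length R0. dir_inner d \<alpha> p (R0!i) = 0"
      using p R0(2) nth_mem unfolding orth_space_def by blast
  qed
  have "is_onb d \<alpha> n R1"
    unfolding is_onb_def using R1_orth R1_span orthonormal_append_D(1)[OF R1(2)]
    unfolding orthonormal_def in_span_def by blast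
  then show ?thesis ..
qed

definition onb :: "nat \<Rightarrow> ((nat \<Rightarrow> real) \<Rightarrow> real) list" where
  "onb n = (SOME Ps. is_onb d \<alpha> n Ps)"

lemma is_onb_onb: "is_onb d \<alpha> n (onb n)"
  unfolding onb_def using is_onb_exists by (rule someI_ex)

lemma orthonormal_onb: "orthonormal (onb n)"
  using is_onb_onb[of n] unfolding is_onb_def orthonormal_def by auto

lemma onb_in_orth_space: "f \<in> set (onb n) \<Longrightarrow> f \<in> orth_space d \<alpha> n"
  using is_onb_onb[of n] unfolding is_onb_def by auto

lemma bounded_measurable_onb: "\<forall>f\<in>set (onb n). bounded_measurable d f"
  using onb_in_orth_space unfolding orth_space_def by (auto intro: poly_deg_le_bounded_measurable)

lemma jacobi_kernel_eq_sum:
  "jacobi_kernel d \<alpha> n x y = (\<Sum>i<length (onb n). (onb n ! i) y * (onb n ! i) x)"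
  unfolding jacobi_kernel_def onb_def[symmetric] Let_def
  by (simp add: sum_list_sum_nth atLeast0LessThan mult.commute)

lemma jacobi_kernel_orth:
  assumes "m < n" "poly_deg_le d m q"
  shows "dir_inner d \<alpha> (\<lambda>x. jacobi_kernel d \<alpha> n x x0) q = 0"
proof -
  have "dir_inner d \<alpha> (\<lambda>x. jacobi_kernel d \<alpha> n x x0) q
      = (\<Sum>i<length (onb n). (onb n ! i) x0 * dir_inner d \<alpha> (onb n ! i) q)"
    using bounded_measurable_onb poly_deg_le_bounded_measurable[OF assms(2)]
    by (intro dir_inner_lincomb_left) (auto simp: jacobi_kernel_eq_sum)
  also have "\<dots> = 0"
    using assms onb_in_orth_space nth_mem unfolding orth_space_def by (intro sum.neutral) fastforce
  finally show ?thesis .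
qed

lemma jacobi_kernel_reproducing:
  assumes "h \<in> orth_space d \<alpha> n" "x0 \<in> std_simplex d"
  shows "dir_inner d \<alpha> h (\<lambda>x. jacobi_kernel d \<alpha> n x x0) = h x0"
proof -
  let ?P = "onb n"
  obtain c where c: "\<forall>x\<in>std_simplex d. h x = (\<Sum>i<length ?P. c i * (?P ! i) x)"
    using is_onb_onb[of n] assms(1) unfolding is_onb_def by blast
  have "bounded_measurable d h"
    using assms unfolding orth_space_def by (auto intro: poly_deg_le_bounded_measurable)
  then have "dir_inner d \<alpha> h (\<lambda>x. jacobi_kernel d \<alpha> n x x0)
      = (\<Sum>i<length ?P. (?P ! i) x0 * dir_inner d \<alpha> (?P ! i) h)"
    using bounded_measurable_onb
    by (subst dir_inner_commute) (intro dir_inner_lincomb_left; auto simp: jacobi_kernel_eq_sum)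
  also have "\<dots> = (\<Sum>i<length ?P. (?P ! i) x0 * c i)"
    using dir_inner_orthonormal_coeff[OF orthonormal_onb bounded_measurable_onb c]
    by (intro sum.cong refl) (simp add: dir_inner_commute)
  also have "\<dots> = h x0" using c assms(2) by (simp add: mult.commute)
  finally show ?thesis .
qed

lemma jacobi_kernel_unique:
  assumes "q \<in> orth_space d \<alpha> n" "\<And>P. P \<in> orth_space d \<alpha> n \<Longrightarrow> dir_inner d \<alpha> P q = P x0"
    and "y \<in> std_simplex d"
  shows "jacobi_kernel d \<alpha> n y x0 = q y"
proof -
  let ?P = "onb n"
  obtain c where c: "\<forall>x\<in>std_simplex d. q x = (\<Sum>i<length ?P. c i * (?P ! i) x)"
    using is_onb_onb[of n] assms(1) unfolding is_onb_def by blast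
  have "c i = (?P ! i) x0" if "i < length ?P" for i
  proof -
    have "c i = dir_inner d \<alpha> q (?P ! i)"
      using dir_inner_orthonormal_coeff[OF orthonormal_onb bounded_measurable_onb c that] by simp
    also have "\<dots> = (?P ! i) x0"
      using assms(2) onb_in_orth_space nth_mem[OF that] dir_inner_commute by metis
    finally show ?thesis .
  qed
  then show ?thesis using c assms(3) unfolding jacobi_kernel_eq_sum by simp
qed

lemma jacobi_kernel_segment_poly:
  assumes "d = 2"
  shows "\<exists>Q. segment_poly n (\<lambda>x. jacobi_kernel d \<alpha> n x x0) Q"
proof -
  let ?P = "onb n"
  have "\<forall>i<length ?P. \<exists>Q. segment_poly n (?P ! i) Q"
    using onb_in_orth_space nth_mem poly_deg_le_2_segment_poly assms unfolding orth_space_def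
      by blast
  then obtain Q where Q: "\<forall>i<length ?P. segment_poly n (?P ! i) (Q i)" by metis
  have "segment_poly n (\<lambda>x. \<Sum>i<length ?P. (?P ! i) x0 * (?P ! i) x)
      (\<Sum>i<length ?P. smult ((?P ! i) x0) (Q i))"
    using Q by (intro segment_poly_sum segment_poly_cmult) auto
  then show ?thesis unfolding jacobi_kernel_eq_sum by blast
qed

end

section \<open>Aggregation\<close>

definition exp2 :: "nat \<Rightarrow> nat \<Rightarrow> nat \<Rightarrow> nat" where
  "exp2 p K = (\<lambda>i. if i = 0 then p else if i = 1 then K else 0)"

lemma monomial_exp2: "monomial 2 (exp2 p K) x = x 0 ^ p * x 1 ^ K"
  unfolding monomial_def exp2_def by (simp add: numeral_2_eq_2)

lemma monomial_shift:
  assumes "j < d"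
  shows "monomial d (\<lambda>i. if i = j then k i + m else k i) y = y j ^ m * monomial d k y"
proof -
  have "monomial d (\<lambda>i. if i = j then k i + m else k i) y = y j ^ (k j + m)
      * (\<Prod>i\<in>{..<d}-{j}. y i ^ k i)"
    unfolding monomial_def using assms by (subst prod.remove[of _ j]) (auto intro!: prod.cong)
  moreover have "monomial d k y = y j ^ k j * (\<Prod>i\<in>{..<d}-{j}. y i ^ k i)"
    unfolding monomial_def using assms by (subst prod.remove[of _ j]) auto
  ultimately show ?thesis by (simp add: power_add algebra_simps)
qed

text \<open>Aggregation of the Dirichlet distribution: under D_alpha the pair (y_j, 1 - y_j) is
  distributed as D_(alpha_j, |alpha| - alpha_j). On moments this is
  dir_expect_coord_power_monomial below, where aggregation_factor k accounts for the exponents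
  of the coordinates other than j.\<close>

locale dirichlet_aggregation = dirichlet +
  fixes j :: nat
  assumes j_less: "j < d" and two_le_dim: "2 \<le> d"
begin

definition others :: "nat set" where
  "others = {..<d} - {j}"

definition beta_params :: "nat \<Rightarrow> real" where
  "beta_params = (\<lambda>i. if i = 0 then \<alpha> j else (\<Sum>i<d. \<alpha> i) - \<alpha> j)"

definition deg_others :: "(nat \<Rightarrow> nat) \<Rightarrow> nat" where
  "deg_others k = (\<Sum>i\<in>others. k i)"

definition aggregation_factor :: "(nat \<Rightarrow> nat) \<Rightarrow> real" where
  "aggregation_factor k =
     (\<Prod>i\<in>others. Gamma (\<alpha> i + real (k i)) / Gamma (\<alpha> i)) * Gamma (\<Sum>i\<in>others. \<alpha> i)
       / Gamma ((\<Sum>i\<in>others. \<alpha> i) + real (deg_others k))"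

lemma finite_others: "finite others" and j_notin_others: "j \<notin> others"
  and lessThan_eq_insert_others: "{..<d} = insert j others"
  unfolding others_def using j_less by auto

lemma beta_params_1: "beta_params 1 = (\<Sum>i\<in>others. \<alpha> i)"
  unfolding beta_params_def others_def using j_less by (simp add: sum_diff1)

lemma sum_others_alpha_pos: "(\<Sum>i\<in>others. \<alpha> i) > 0"
proof -
  define i where "i = (if j = 0 then 1 else 0::nat)"
  have i: "i \<in> others" unfolding others_def i_def using two_le_dim by auto
  then have "\<alpha> i \<le> (\<Sum>i\<in>others. \<alpha> i)"
    using alpha_pos finite_others unfolding others_def by (intro member_le_sum)
      (auto simp: less_imp_le)
  moreover have "\<alpha> i > 0" using alpha_pos i unfolding others_def by auto
  ultimately show ?thesis by simp
qed

sublocale beta: dirichlet 2 beta_params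
  using alpha_pos j_less sum_others_alpha_pos beta_params_1
  by unfold_locales (auto simp: beta_params_def less_2_cases_iff)

lemma sum_exponents_split: "(\<Sum>i<d. k i) = k j + deg_others k"
  unfolding deg_others_def lessThan_eq_insert_others using finite_others j_notin_others by simp

lemma multi_beta_shift_ratio:
  "multi_beta d (\<lambda>i. \<alpha> i + real (if i = j then k i + m else k i)) / multi_beta d \<alpha>
   = aggregation_factor k *
     (multi_beta 2 (\<lambda>i. beta_params i + real (exp2 (k j + m) (deg_others k) i)) / multi_beta 2 beta_params)"
proof -
  define a where "a = \<alpha> j"
  define b where "b = (\<Sum>i\<in>others. \<alpha> i)"
  define PR where "PR = (\<Prod>i\<in>others. Gamma (\<alpha> i + real (k i)))"
  define PR0 where "PR0 = (\<Prod>i\<in>others. Gamma (\<alpha> i))"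
  note fin = finite_others j_notin_others
  note ins = lessThan_eq_insert_others
  have apos: "a > 0" unfolding a_def using alpha_pos j_less by auto
  have bpos: "b > 0" unfolding b_def by (rule sum_others_alpha_pos)
  have others_pos: "\<alpha> i > 0" if "i \<in> others" for i using alpha_pos that unfolding others_def by auto
  have AB: "(\<Sum>i<d. \<alpha> i) = a + b" unfolding ins a_def b_def using fin by simp
  have S1: "(\<Sum>i<d. \<alpha> i + real (if i = j then k i + m else k i)) = a + b + real (k j + m)
      + real (deg_others k)"
  proof -
    have "(\<Sum>i<d. real (if i = j then k i + m else k i)) = real (k j + m) + (\<Sum>i\<in>others. real (k i))"
      unfolding ins using fin by (auto intro!: sum.cong)
    then show ?thesis unfolding deg_others_def AB[symmetric] by (simp add: sum.distrib)
  qed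
  have D1: "multi_beta d (\<lambda>i. \<alpha> i + real (if i = j then k i + m else k i))
      = Gamma (a + real (k j + m)) * PR / Gamma (a + b + real (k j + m) + real (deg_others k))"
    unfolding multi_beta_def S1 unfolding ins PR_def a_def using fin by (auto intro!: prod.cong)
  have D0: "multi_beta d \<alpha> = Gamma a * PR0 / Gamma (a + b)"
    unfolding multi_beta_def AB unfolding ins PR0_def a_def using fin by auto
  have DB1: "multi_beta 2 (\<lambda>i. beta_params i + real (exp2 (k j + m) (deg_others k) i))
      = Gamma (a + real (k j + m)) * Gamma (b + real (deg_others k)) / Gamma (a + b + real (k j + m) + real (deg_others k))"
    using beta_params_1 unfolding multi_beta_def exp2_def beta_params_def a_def b_def
    by (simp add: numeral_2_eq_2 algebra_simps)
  have DB0: "multi_beta 2 beta_params = Gamma a * Gamma b / Gamma (a + b)"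
    using beta_params_1 unfolding multi_beta_def beta_params_def a_def b_def
    by (simp add: numeral_2_eq_2 algebra_simps)
  have "(\<Prod>i\<in>others. Gamma (\<alpha> i + real (k i)) / Gamma (\<alpha> i)) = PR / PR0"
    unfolding PR_def PR0_def by (rule prod_dividef)
  moreover have "PR0 \<noteq> 0" "PR \<noteq> 0"
    unfolding PR0_def PR_def using others_pos finite_others
    by (auto simp: prod_zero_iff) (metis Gamma_real_nonzero add_pos_nonneg of_nat_0_le_iff)+
  moreover have "Gamma a \<noteq> 0" "Gamma b \<noteq> 0" "Gamma (a + b) \<noteq> 0" "Gamma (a + real (k j + m)) \<noteq> 0"
    "Gamma (b + real (deg_others k)) \<noteq> 0" "Gamma (a + b + real (k j + m) + real (deg_others k)) \<noteq> 0"
    using apos bpos by (auto intro!: Gamma_real_nonzero add_pos_nonneg)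
  ultimately show ?thesis
    unfolding D1 D0 DB1 DB0 aggregation_factor_def b_def[symmetric]
    by (simp add: field_simps)
qed

lemma monomial_basis_pt: "monomial d k (basis_pt j) = (if deg_others k = 0 then 1 else 0)"
proof -
  have "monomial d k (basis_pt j) = (\<Prod>i\<in>others. (0::real) ^ k i)"
    unfolding monomial_def lessThan_eq_insert_others basis_pt_def
    using finite_others j_notin_others by (auto intro!: prod.cong)
  also have "\<dots> = (if \<forall>i\<in>others. k i = 0 then 1 else 0)"
    using finite_others by (auto simp: power_0_left prod_zero_iff)
  also have "(\<forall>i\<in>others. k i = 0) \<longleftrightarrow> deg_others k = 0"
    unfolding deg_others_def using finite_others by simp
  finally show ?thesis .
qed

lemma aggregation_factor_eq_1: "deg_others k = 0 \<Longrightarrow> aggregation_factor k = 1"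
proof -
  assume K: "deg_others k = 0"
  then have "\<forall>i\<in>others. k i = 0" using finite_others unfolding deg_others_def by simp
  then have "(\<Prod>i\<in>others. Gamma (\<alpha> i + real (k i)) / Gamma (\<alpha> i)) = 1"
    using alpha_pos Gamma_real_nonzero unfolding others_def by (intro prod.neutral) auto
  then show ?thesis
    unfolding aggregation_factor_def K using Gamma_real_nonzero[OF sum_others_alpha_pos] by simp
qed

lemma dir_expect_coord_power_monomial:
  "dir_expect d \<alpha> (\<lambda>y. y j ^ m * monomial d k y)
   = aggregation_factor k * dir_expect 2 beta_params (\<lambda>x. x 0 ^ m * monomial 2 (exp2 (k j) (deg_others k)) x)"
proof -
  have L: "(\<lambda>y. y j ^ m * monomial d k y) = monomial d (\<lambda>i. if i = j then k i + m else k i)"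
    using monomial_shift[OF j_less] by auto
  have R: "(\<lambda>x. x 0 ^ m * monomial 2 (exp2 (k j) (deg_others k)) x)
      = monomial 2 (exp2 (k j + m) (deg_others k))"
    unfolding monomial_exp2 by (simp add: power_add fun_eq_iff)
  show ?thesis
    unfolding L R dir_expect_monomial beta.dir_expect_monomial multi_beta_shift_ratio ..
qed

lemma dir_expect_poly_coord_monomial:
  "dir_expect d \<alpha> (\<lambda>y. poly g (y j) * monomial d k y)
   = aggregation_factor k * dir_expect 2 beta_params (\<lambda>x. poly g (x 0) * monomial 2 (exp2 (k j) (deg_others k)) x)"
proof -
  have bm: "bounded_measurable D (\<lambda>y. y i ^ m * monomial D k' y)" if "i < D" for D i m k'
  proof -
    have "(\<lambda>y. y i ^ m * monomial D k' y) = monomial D (\<lambda>l. if l = i then k' l + m else k' l)"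
      using monomial_shift[OF that] by (simp add: fun_eq_iff)
    then show ?thesis by (simp add: bounded_measurable_monomial)
  qed
  have "dir_expect d \<alpha> (\<lambda>y. poly g (y j) * monomial d k y)
      = (\<Sum>m\<le>degree g. coeff g m * dir_expect d \<alpha> (\<lambda>y. y j ^ m * monomial d k y))"
    unfolding poly_altdef sum_distrib_right mult.assoc
    by (subst dir_expect_sum)
      (auto simp: dir_expect_cmult intro!: bounded_measurable_cmult bm j_less)
  also have "\<dots> = aggregation_factor k *
      (\<Sum>m\<le>degree g. coeff g m * dir_expect 2 beta_params (\<lambda>x. x 0 ^ m * monomial 2 (exp2 (k j) (deg_others k)) x))"
    unfolding dir_expect_coord_power_monomial by (simp add: sum_distrib_left algebra_simps)
  also have "(\<Sum>m\<le>degree g. coeff g m * dir_expect 2 beta_params (\<lambda>x. x 0 ^ m * monomial 2 (exp2 (k j) (deg_others k)) x))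
      = dir_expect 2 beta_params (\<lambda>x. poly g (x 0) * monomial 2 (exp2 (k j) (deg_others k)) x)"
    unfolding poly_altdef sum_distrib_right mult.assoc
    by (subst beta.dir_expect_sum)
      (auto simp: beta.dir_expect_cmult intro!: bounded_measurable_cmult bm)
  finally show ?thesis .
qed

text \<open>The Beta-side polynomial carrying the moments of p = sum of c k times x^k against
  functions of y_j.\<close>

definition aggregate :: "nat \<Rightarrow> ((nat \<Rightarrow> nat) \<Rightarrow> real) \<Rightarrow> (nat \<Rightarrow> real) \<Rightarrow> real" where
  "aggregate m c x
      = (\<Sum>k\<in>exps d m. c k * aggregation_factor k * monomial 2 (exp2 (k j) (deg_others k)) x)"

lemma dir_expect_poly_coord_times_poly:
  assumes "p = (\<lambda>x. \<Sum>k\<in>exps d m. c k * monomial d k x)"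
  shows "dir_expect d \<alpha> (\<lambda>y. poly g (y j) * p y)
      = dir_expect 2 beta_params (\<lambda>x. poly g (x 0) * aggregate m c x)"
proof -
  have bm: "bounded_measurable D (\<lambda>y. poly g (y i) * monomial D k y)" if "i < D" for D i k
    using that by (intro bounded_measurable_mult bounded_measurable_monomial
        poly_deg_le_bounded_measurable[OF poly_deg_le_univariate[of g "degree g"]]) auto
  have "dir_expect d \<alpha> (\<lambda>y. poly g (y j) * p y)
      = (\<Sum>k\<in>exps d m. c k * dir_expect d \<alpha> (\<lambda>y. poly g (y j) * monomial d k y))"
    unfolding assms sum_distrib_left mult.left_commute[of "poly g _"]
    by (subst dir_expect_sum)
      (auto simp: dir_expect_cmult finite_exps intro!: bounded_measurable_cmult bm j_less)
  also have "\<dots> = (\<Sum>k\<in>exps d m. c k * aggregation_factor k *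
      dir_expect 2 beta_params (\<lambda>x. poly g (x 0) * monomial 2 (exp2 (k j) (deg_others k)) x))"
    unfolding dir_expect_poly_coord_monomial by (simp add: mult.assoc)
  also have "\<dots> = dir_expect 2 beta_params (\<lambda>x. poly g (x 0) * aggregate m c x)"
    unfolding aggregate_def sum_distrib_left mult.left_commute[of "poly g _"]
    by (subst beta.dir_expect_sum)
      (auto simp: beta.dir_expect_cmult finite_exps intro!: bounded_measurable_cmult bm)
  finally show ?thesis .
qed

lemma aggregate_poly_deg_le: "poly_deg_le 2 m (aggregate m c)"
proof -
  have "exp2 (k j) (deg_others k) \<in> exps 2 m" if "k \<in> exps d m" for k
    using that sum_exponents_split[of k] unfolding exps_def exp2_def by (auto simp: numeral_2_eq_2)
  then show ?thesis unfolding aggregate_def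
    by (intro poly_deg_le_sum poly_deg_le_cmult poly_deg_le_monomial finite_exps)
qed

lemma aggregate_pt2_1: "aggregate m c (pt2 1) = (\<Sum>k\<in>exps d m. c k * monomial d k (basis_pt j))"
  unfolding aggregate_def monomial_exp2 monomial_basis_pt
  by (intro sum.cong refl) (auto simp: pt2_def aggregation_factor_eq_1)

lemma dir_inner_poly_coord:
  assumes f: "segment_poly N f Q" and p: "p = (\<lambda>x. \<Sum>k\<in>exps d m. c k * monomial d k x)"
  shows "dir_inner d \<alpha> (\<lambda>y. poly Q (y j)) p = dir_inner 2 beta_params f (aggregate m c)"
proof -
  have "f x = poly Q (x 0)" if "x \<in> std_simplex 2" for x
    using f pt2_coord[OF that] unfolding segment_poly_def by metis
  then have "dir_inner 2 beta_params f (aggregate m c)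
      = dir_expect 2 beta_params (\<lambda>x. poly Q (x 0) * aggregate m c x)"
    unfolding dir_inner_def by (intro dir_expect_cong) auto
  then show ?thesis unfolding dir_inner_def dir_expect_poly_coord_times_poly[OF p] ..
qed

lemma poly_coord_in_orth_space:
  assumes Q: "segment_poly n f Q"
    and f: "\<And>m q. m < n \<Longrightarrow> poly_deg_le 2 m q \<Longrightarrow> dir_inner 2 beta_params f q = 0"
  shows "(\<lambda>y. poly Q (y j)) \<in> orth_space d \<alpha> n"
  unfolding orth_space_def
proof (intro CollectI conjI allI impI)
  show "poly_deg_le d n (\<lambda>y. poly Q (y j))"
    using Q j_less unfolding segment_poly_def by (intro poly_deg_le_univariate) auto
  fix m q assume m: "m < n" and q: "poly_deg_le d m q"
  obtain c where c: "q = (\<lambda>x. \<Sum>k\<in>exps d m. c k * monomial d k x)"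
    using q unfolding poly_deg_le_iff by auto
  show "dir_inner d \<alpha> (\<lambda>y. poly Q (y j)) q = 0"
    unfolding dir_inner_poly_coord[OF Q c] by (rule f[OF m aggregate_poly_deg_le])
qed

lemma aggregate_in_orth_space:
  assumes P: "P \<in> orth_space d \<alpha> n" and c: "P = (\<lambda>x. \<Sum>k\<in>exps d n. c k * monomial d k x)"
  shows "aggregate n c \<in> orth_space 2 beta_params n"
  unfolding orth_space_def
proof (intro CollectI conjI allI impI aggregate_poly_deg_le)
  fix m r assume m: "m < n" and r: "poly_deg_le 2 m r"
  obtain R where R: "segment_poly m r R" using poly_deg_le_2_segment_poly[OF r] by blast
  have "poly_deg_le d m (\<lambda>y. poly R (y j))"
    using R j_less unfolding segment_poly_def by (intro poly_deg_le_univariate) auto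
  then have "dir_inner d \<alpha> P (\<lambda>y. poly R (y j)) = 0" using P m unfolding orth_space_def by auto
  then show "dir_inner 2 beta_params (aggregate n c) r = 0"
    using dir_inner_poly_coord[OF R c] dir_inner_commute beta.dir_inner_commute by metis
qed

lemma poly_coord_reproducing:
  assumes Q: "segment_poly n (\<lambda>x. jacobi_kernel 2 beta_params n x (pt2 1)) Q"
    and P: "P \<in> orth_space d \<alpha> n"
  shows "dir_inner d \<alpha> P (\<lambda>y. poly Q (y j)) = P (basis_pt j)"
proof -
  obtain c where c: "P = (\<lambda>x. \<Sum>k\<in>exps d n. c k * monomial d k x)"
    using P unfolding orth_space_def poly_deg_le_iff by auto
  have "dir_inner d \<alpha> P (\<lambda>y. poly Q (y j))
      = dir_inner 2 beta_params (aggregate n c) (\<lambda>x. jacobi_kernel 2 beta_params n x (pt2 1))"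
    using dir_inner_poly_coord[OF Q c] dir_inner_commute beta.dir_inner_commute by metis
  also have "\<dots> = aggregate n c (pt2 1)"
    using aggregate_in_orth_space[OF P c] pt2_in_std_simplex[of 1]
    by (intro beta.jacobi_kernel_reproducing) auto
  also have "\<dots> = P (basis_pt j)" unfolding aggregate_pt2_1 c ..
  finally show ?thesis .
qed

lemma jacobi_kernel_basis_pt:
  assumes "y \<in> std_simplex d"
  shows "jacobi_kernel d \<alpha> n y (basis_pt j) = jacobi_kernel 2 beta_params n (pt2 (y j)) (pt2 1)"
proof -
  obtain Q where Q: "segment_poly n (\<lambda>x. jacobi_kernel 2 beta_params n x (pt2 1)) Q"
    using beta.jacobi_kernel_segment_poly by blast
  have "jacobi_kernel d \<alpha> n y (basis_pt j) = poly Q (y j)"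
    using jacobi_kernel_unique[OF poly_coord_in_orth_space[OF Q beta.jacobi_kernel_orth]
        poly_coord_reproducing[OF Q] assms] .
  also have "\<dots> = jacobi_kernel 2 beta_params n (pt2 (y j)) (pt2 1)"
    using Q unfolding segment_poly_def by simp
  finally show ?thesis .
qed

end

theorem mainTheorem2:
  fixes d :: nat and \<alpha> :: "nat \<Rightarrow> real" and j n :: nat and y :: "nat \<Rightarrow> real"
  assumes "d \<ge> 2"
    and "\<forall>i<d. \<alpha> i > 0"
    and "j < d"
    and "y \<in> std_simplex d"
  shows "jacobi_kernel d \<alpha> n y (basis_pt j)
           = jacobi_kernel_1 (\<alpha> j) ((\<Sum>i<d. \<alpha> i) - \<alpha> j) n (y j) 1"
proof -
  interpret dirichlet_aggregation d \<alpha> j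
    using assms by unfold_locales auto
  show ?thesis
    unfolding jacobi_kernel_basis_pt[OF assms(4)] jacobi_kernel_1_def beta_params_def ..
qed

end
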